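(* Let $a<b$, $n\in\mathbb N$, and $\alpha=(\alpha_1,\ldots,\alpha_n)$ with $\alpha_i\in(i-1,i)$. Fix reals $z_a$ and $x^j_{ia}$ for $i\in\{1,\ldots,n\}$, $j\in\{0,\ldots,i-1\}$. Call $x=(x_1,\ldots,x_n)$ admissible if $x_i\in C^n([a,b],\mathbb R)$, ${^C_aD^{\alpha_i}_t}x_i\in C^1([a,b],\mathbb R)$ and $x_i^{(j)}(a)=x^j_{ia}$ for all $i$ and $j\in\{0,\ldots,i-1\}$ (the values $x_i^{(j)}(b)$ are free). Let $L:[a,b]\times\mathbb R^{2n+1}\to\mathbb R$, $L=L(t,x,v,z)$, be of class $C^1$, and for admissible $x$ let $z[x;\cdot]$ solve $\dot z(t)=L(t,x(t),{^C_aD^\alpha_t}x(t),z(t))$, $t\in[a,b]$, $z(a)=z_a$, where ${^C_aD^\alpha_t}x=({^C_aD^{\alpha_1}_t}x_1,\ldots,{^C_aD^{\alpha_n}_t}x_n)$. Write $[x,z](t):=(t,x(t),{^C_aD^\alpha_t}x(t),z(t))$, $\lambda(t):=\exp\left(-\int_a^t\frac{\partial L}{\partial z}[x,z](\tau)\,d\tau\right)$, and assume ${_tD^{\alpha_i}_b}\left(\lambda(t)\frac{\partial L}{\partial {^C_aD^{\alpha_i}_t}x_i}[x,z](t)\right)$ exists and is continuous on $[a,b]$ for each $i$. If $x$ is admissible and $z[x;b]$ attains an extremum (so $\frac{d}{d\epsilon}z[x+\epsilon\eta;b]|_{\epsilon=0}=0$ for all $\eta$ of the same regularity with $\eta_i^{(j)}(a)=0$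 for all $i$, $j\in\{0,\ldots,i-1\}$), then $(x_1,\ldots,x_n,z)$ satisfies on $[a,b]$ $$\lambda(t)\frac{\partial L}{\partial x_i}[x,z](t)+{_tD^{\alpha_i}_b}\left(\lambda(t)\frac{\partial L}{\partial {^C_aD^{\alpha_i}_t}x_i}[x,z](t)\right)=0,\quad i=1,\ldots,n,$$ and the transversality conditions $${_tD^{\alpha_i+j-i}_b}\left(\lambda(t)\frac{\partial L}{\partial {^C_aD^{\alpha_i}_t}x_i}[x,z](t)\right)\Big|_{t=b}=0$$ for all $i\in\{1,\ldots,n\}$ and all $j\in\{0,\ldots,i-1\}$.
   Context: For $\alpha>0$, $m=[\alpha]+1$ and $f:[a,b]\to\mathbb R$: left Caputo derivative ${^C_aD^\alpha_t}f(t)=\frac{1}{\Gamma(m-\alpha)}\int_a^t(t-\tau)^{m-\alpha-1}f^{(m)}(\tau)\,d\tau$; right Riemann–Liouville derivative ${_tD^\alpha_b}f(t)=\frac{(-1)^m}{\Gamma(m-\alpha)}\frac{d^m}{dt^m}\int_t^b(\tau-t)^{m-\alpha-1}f(\tau)\,d\tau$. For a negative order $-\beta<0$, ${_tD^{-\beta}_b}$ denotes the right Riemann–Liouville integral ${_tI^{\beta}_b}f(t)=\frac{1}{\Gamma(\beta)}\int_t^b(\tau-t)^{\beta-1}f(\tau)\,d\tau$. Partial derivatives of $L$ are with respect to the corresponding components of its arguments $(t,x,v,z)$; $\frac{\partial L}{\partial {^C_aD^{\alpha_i}_t}x_i}$ means $\partial L/\partial v_i$. The solution $z$ is assumed to exist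 and depend differentiably on a parameter $\epsilon$ when $x$ is replaced by $x+\epsilon\eta$, with the same initial value $z_a$. *)

theory Defs
  imports "HOL-Analysis.Analysis"
begin

fun hderiv :: "nat \<Rightarrow> real set \<Rightarrow> (real \<Rightarrow> real) \<Rightarrow> real \<Rightarrow> real" where
  "hderiv 0 S f = f"
| "hderiv (Suc k) S f = (\<lambda>t. vector_derivative (hderiv k S f) (at t within S))"

definition Cn_on :: "nat \<Rightarrow> real set \<Rightarrow> (real \<Rightarrow> real) \<Rightarrow> bool" where
  "Cn_on m S f \<longleftrightarrow>
     (\<forall>k<m. \<forall>t\<in>S. (hderiv k S f has_vector_derivative hderiv (Suc k) S f t) (at t within S))
     \<and> continuous_on S (hderiv m S f)"

definition caputoL :: "real \<Rightarrow> real \<Rightarrow> real \<Rightarrow> (real \<Rightarrow> real) \<Rightarrow> real \<Rightarrow> real" where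
  "caputoL a b al f t =
     (let m = nat \<lfloor>al\<rfloor> + 1 in
      integral {a..t} (\<lambda>\<tau>. (t - \<tau>) powr (real m - al - 1) * hderiv m {a..b} f \<tau>)
        / Gamma (real m - al))"

definition rRL_int :: "real \<Rightarrow> real \<Rightarrow> (real \<Rightarrow> real) \<Rightarrow> real \<Rightarrow> real" where
  "rRL_int b be f t = integral {t..b} (\<lambda>\<tau>. (\<tau> - t) powr (be - 1) * f \<tau>) / Gamma be"

definition rRL_deriv :: "real \<Rightarrow> real \<Rightarrow> real \<Rightarrow> (real \<Rightarrow> real) \<Rightarrow> real \<Rightarrow> real" where
  "rRL_deriv a b al f t =
     (let m = nat \<lfloor>al\<rfloor> + 1 in
      (-1) ^ m * hderiv m {a..b} (rRL_int b (real m - al) f) t)"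

definition rRL_deriv_exists_cont :: "real \<Rightarrow> real \<Rightarrow> real \<Rightarrow> (real \<Rightarrow> real) \<Rightarrow> bool" where
  "rRL_deriv_exists_cont a b al f \<longleftrightarrow>
     Cn_on (nat \<lfloor>al\<rfloor> + 1) {a..b} (rRL_int b (real (nat \<lfloor>al\<rfloor> + 1) - al) f)"

text \<open>Operator of arbitrary real order: negative order = RL integral.\<close>
definition rRL :: "real \<Rightarrow> real \<Rightarrow> real \<Rightarrow> (real \<Rightarrow> real) \<Rightarrow> real \<Rightarrow> real" where
  "rRL a b al f t = (if al < 0 then rRL_int b (- al) f t else rRL_deriv a b al f t)"

section \<open>Vectors in R^n as functions nat => real supported on {1..n}\<close>

definition vecn :: "nat \<Rightarrow> (nat \<Rightarrow> real) \<Rightarrow> nat \<Rightarrow> real" where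
  "vecn n f = (\<lambda>i. if 1 \<le> i \<and> i \<le> n then f i else 0)"

text \<open>The domain [a,b] x R^(2n+1) of the Lagrangian L(t,x,v,z).\<close>
definition Ldom :: "nat \<Rightarrow> real \<Rightarrow> real \<Rightarrow> (real \<times> (nat \<Rightarrow> real) \<times> (nat \<Rightarrow> real) \<times> real) set" where
  "Ldom n a b = {(t, x, v, z). t \<in> {a..b} \<and> (\<forall>i. \<not> (1 \<le> i \<and> i \<le> n) \<longrightarrow> x i = 0 \<and> v i = 0)}"

type_synonym lagr = "real \<Rightarrow> (nat \<Rightarrow> real) \<Rightarrow> (nat \<Rightarrow> real) \<Rightarrow> real \<Rightarrow> real"

definition pLx :: "lagr \<Rightarrow> nat \<Rightarrow> real \<Rightarrow> (nat \<Rightarrow> real) \<Rightarrow> (nat \<Rightarrow> real) \<Rightarrow> real \<Rightarrow> real" where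
  "pLx L i t x v z = deriv (\<lambda>s. L t (x(i := s)) v z) (x i)"
definition pLv :: "lagr \<Rightarrow> nat \<Rightarrow> real \<Rightarrow> (nat \<Rightarrow> real) \<Rightarrow> (nat \<Rightarrow> real) \<Rightarrow> real \<Rightarrow> real" where
  "pLv L i t x v z = deriv (\<lambda>s. L t x (v(i := s)) z) (v i)"
definition pLz :: "lagr \<Rightarrow> real \<Rightarrow> (nat \<Rightarrow> real) \<Rightarrow> (nat \<Rightarrow> real) \<Rightarrow> real \<Rightarrow> real" where
  "pLz L t x v z = deriv (\<lambda>s. L t x v s) z"

definition C1_lagr :: "nat \<Rightarrow> real \<Rightarrow> real \<Rightarrow> lagr \<Rightarrow> bool" where
  "C1_lagr n a b L \<longleftrightarrow>
    (\<exists>Lt Lx Lv Lz.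
      (\<forall>(t, x, v, z) \<in> Ldom n a b.
          ((\<lambda>s. L s x v z) has_real_derivative Lt (t, x, v, z)) (at t within {a..b})
        \<and> (\<forall>i\<in>{1..n}. ((\<lambda>s. L t (x(i := s)) v z) has_real_derivative Lx i (t, x, v, z)) (at (x i)))
        \<and> (\<forall>i\<in>{1..n}. ((\<lambda>s. L t x (v(i := s)) z) has_real_derivative Lv i (t, x, v, z)) (at (v i)))
        \<and> ((\<lambda>s. L t x v s) has_real_derivative Lz (t, x, v, z)) (at z))
      \<and> continuous_on (Ldom n a b) Lt
      \<and> (\<forall>i\<in>{1..n}. continuous_on (Ldom n a b) (Lx i) \<and> continuous_on (Ldom n a b) (Lv i))
      \<and> continuous_on (Ldom n a b) Lz)"

definition admissible ::
  "nat \<Rightarrow> real \<Rightarrow> real \<Rightarrow> (nat \<Rightarrow> real) \<Rightarrow> (nat \<Rightarrow> nat \<Rightarrow> real) \<Rightarrow> (nat \<Rightarrow> real \<Rightarrow> real) \<Rightarrow> bool" where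
  "admissible n a b al xa x \<longleftrightarrow>
     (\<forall>i\<in>{1..n}. Cn_on n {a..b} (x i)
        \<and> Cn_on 1 {a..b} (caputoL a b (al i) (x i))
        \<and> (\<forall>j<i. hderiv j {a..b} (x i) a = xa i j))"

definition xvec :: "nat \<Rightarrow> (nat \<Rightarrow> real \<Rightarrow> real) \<Rightarrow> real \<Rightarrow> nat \<Rightarrow> real" where
  "xvec n x t = vecn n (\<lambda>i. x i t)"
definition cvec :: "nat \<Rightarrow> real \<Rightarrow> real \<Rightarrow> (nat \<Rightarrow> real) \<Rightarrow> (nat \<Rightarrow> real \<Rightarrow> real) \<Rightarrow> real \<Rightarrow> nat \<Rightarrow> real" where
  "cvec n a b al x t = vecn n (\<lambda>i. caputoL a b (al i) (x i) t)"

end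

(* Vary x only in its i-th component.  Since L is C^1, the endpoint value z[x + eps eta; b] is
   differentiable in eps, and solving the variational equation with the integrating factor lambda
   gives the derivative lambda(b)^-1 * int_a^b lambda (dL/dx_i eta_i + dL/dv_i CaputoD^al_i eta_i).
   Dirichlet's formula (Fubini on the triangle a <= tau <= t <= b) moves the Caputo derivative onto
   a right Riemann-Liouville integral, and i integrations by parts turn stationarity into
   int_a^b eta_i h_i = boundary terms at b, with h_i the Euler-Lagrange residual.  The test functions
   eta_i(t) = (t - c)_+^(n+1), c in (a,b), vanish to high order at a, so the boundary terms form a
   polynomial in c of degree at most n+1.  Differentiating in c down to the first moment forces
   h_i = 0; the polynomial then vanishes identically, and its coefficients are the transversality
   conditions. *)

theory Submission
  imports Defs "HOL-Computational_Algebra.Polynomial"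
begin

section \<open>Differentiable dependence of ODE solutions on a parameter\<close>

lemma MVT_abs:
  fixes f f' :: "real \<Rightarrow> real"
  assumes "\<And>s. (f has_real_derivative f' s) (at s)"
  obtains \<xi> where "\<bar>\<xi> - p\<bar> \<le> \<bar>q - p\<bar>" "f q - f p = (q - p) * f' \<xi>"
proof -
  consider "p < q" | "q < p" | "p = q" by linarith
  then show thesis
  proof cases
    case 1
    with MVT2[OF 1, of f f'] assms obtain z where "p < z" "z < q" "f q - f p = (q - p) * f' z" by blast
    then show thesis by (intro that[of z]) auto
  next
    case 2
    with MVT2[OF 2, of f f'] assms obtain z where "q < z" "z < p" "f p - f q = (p - q) * f' z" by blast
    then show thesis by (intro that[of z]) (auto simp: algebra_simps)
  qed (use that in auto)
qed

lemma MVT_three_variables: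
  fixes l lp lq lz :: "real \<Rightarrow> real \<Rightarrow> real \<Rightarrow> real"
  assumes dp: "\<And>p q z. ((\<lambda>s. l s q z) has_real_derivative lp p q z) (at p)"
    and dq: "\<And>p q z. ((\<lambda>s. l p s z) has_real_derivative lq p q z) (at q)"
    and dz: "\<And>p q z. ((\<lambda>s. l p q s) has_real_derivative lz p q z) (at z)"
  obtains \<xi>1 \<xi>2 \<xi>3 where "\<bar>\<xi>1 - p0\<bar> \<le> \<bar>p1 - p0\<bar>" "\<bar>\<xi>2 - q0\<bar> \<le> \<bar>q1 - q0\<bar>" "\<bar>\<xi>3 - z0\<bar> \<le> \<bar>z1 - z0\<bar>"
    "l p1 q1 z1 - l p0 q0 z0 = (p1 - p0) * lp \<xi>1 q1 z1 + (q1 - q0) * lq p0 \<xi>2 z1 + (z1 - z0) * lz p0 q0 \<xi>3"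
proof -
  obtain \<xi>1 where 1: "\<bar>\<xi>1 - p0\<bar> \<le> \<bar>p1 - p0\<bar>" "l p1 q1 z1 - l p0 q1 z1 = (p1 - p0) * lp \<xi>1 q1 z1"
    using MVT_abs[of "\<lambda>s. l s q1 z1" "\<lambda>s. lp s q1 z1"] dp by blast
  obtain \<xi>2 where 2: "\<bar>\<xi>2 - q0\<bar> \<le> \<bar>q1 - q0\<bar>" "l p0 q1 z1 - l p0 q0 z1 = (q1 - q0) * lq p0 \<xi>2 z1"
    using MVT_abs[of "\<lambda>s. l p0 s z1" "\<lambda>s. lq p0 s z1"] dq by blast
  obtain \<xi>3 where 3: "\<bar>\<xi>3 - z0\<bar> \<le> \<bar>z1 - z0\<bar>" "l p0 q0 z1 - l p0 q0 z0 = (z1 - z0) * lz p0 q0 \<xi>3"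
    using MVT_abs[of "\<lambda>s. l p0 q0 s" "\<lambda>s. lz p0 q0 s"] dz by blast
  show thesis by (rule that[OF 1(1) 2(1) 3(1)]) (use 1(2) 2(2) 3(2) in linarith)
qed

lemma dist_Pair3_le:
  fixes t p q z p' q' z' :: real
  shows "dist (t, p, q, z) (t, p', q', z') \<le> \<bar>p - p'\<bar> + \<bar>q - q'\<bar> + \<bar>z - z'\<bar>"
proof -
  have "dist (t, p, q, z) (t, p', q', z') = norm (0::real, p - p', q - q', z - z')"
    by (simp add: dist_norm)
  also have "\<dots> \<le> norm (0::real) + norm (p - p', q - q', z - z')" by (rule norm_Pair_le)
  also have "norm (p - p', q - q', z - z') \<le> norm (p - p') + norm (q - q', z - z')" by (rule norm_Pair_le)
  also have "norm (q - q', z - z') \<le> norm (q - q') + norm (z - z')" by (rule norm_Pair_le)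
  finally show ?thesis by simp
qed

lemma uniform_first_order_expansion:
  fixes l lp lq lz :: "real \<Rightarrow> real \<Rightarrow> real \<Rightarrow> real \<Rightarrow> real" and P Q Y :: "real \<Rightarrow> real"
  assumes dp: "\<And>t p q z. t \<in> {a..b} \<Longrightarrow> ((\<lambda>s. l t s q z) has_real_derivative lp t p q z) (at p)"
    and dq: "\<And>t p q z. t \<in> {a..b} \<Longrightarrow> ((\<lambda>s. l t p s z) has_real_derivative lq t p q z) (at q)"
    and dz: "\<And>t p q z. t \<in> {a..b} \<Longrightarrow> ((\<lambda>s. l t p q s) has_real_derivative lz t p q z) (at z)"
    and cp: "continuous_on ({a..b} \<times> UNIV) (\<lambda>(t, p, q, z). lp t p q z)"
    and cq: "continuous_on ({a..b} \<times> UNIV) (\<lambda>(t, p, q, z). lq t p q z)"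
    and cz: "continuous_on ({a..b} \<times> UNIV) (\<lambda>(t, p, q, z). lz t p q z)"
    and cP: "continuous_on {a..b} P" and cQ: "continuous_on {a..b} Q" and cY: "continuous_on {a..b} Y"
    and \<epsilon>: "0 < \<epsilon>"
  obtains \<delta> where "0 < \<delta>"
    "\<And>t u v w. t \<in> {a..b} \<Longrightarrow> \<bar>u\<bar> < \<delta> \<Longrightarrow> \<bar>v\<bar> < \<delta> \<Longrightarrow> \<bar>w\<bar> < \<delta> \<Longrightarrow>
      \<bar>l t (P t + u) (Q t + v) (Y t + w) - l t (P t) (Q t) (Y t)
        - (u * lp t (P t) (Q t) (Y t) + v * lq t (P t) (Q t) (Y t) + w * lz t (P t) (Q t) (Y t))\<bar>
      \<le> \<epsilon> * (\<bar>u\<bar> + \<bar>v\<bar> + \<bar>w\<bar>)"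
proof -
  obtain BP where BP: "\<And>t. t \<in> {a..b} \<Longrightarrow> \<bar>P t\<bar> \<le> BP"
    using continuous_on_compact_bound[OF compact_Icc cP] by (metis real_norm_def)
  obtain BQ where BQ: "\<And>t. t \<in> {a..b} \<Longrightarrow> \<bar>Q t\<bar> \<le> BQ"
    using continuous_on_compact_bound[OF compact_Icc cQ] by (metis real_norm_def)
  obtain BY where BY: "\<And>t. t \<in> {a..b} \<Longrightarrow> \<bar>Y t\<bar> \<le> BY"
    using continuous_on_compact_bound[OF compact_Icc cY] by (metis real_norm_def)
  define R where "R = max BP (max BQ BY) + 1"
  have R: "\<bar>P t\<bar> + 1 \<le> R \<and> \<bar>Q t\<bar> + 1 \<le> R \<and> \<bar>Y t\<bar> + 1 \<le> R" if "t \<in> {a..b}" for t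
    using BP[OF that] BQ[OF that] BY[OF that] unfolding R_def by linarith
  define K where "K = {a..b} \<times> {-R..R} \<times> {-R..R} \<times> {-R..R}"
  have uc: "\<exists>d>0. \<forall>x\<in>K. \<forall>x'\<in>K. dist x' x < d \<longrightarrow> \<bar>f x' - f x\<bar> < \<epsilon>"
    if "continuous_on ({a..b} \<times> UNIV) f" for f :: "real \<times> real \<times> real \<times> real \<Rightarrow> real"
  proof -
    have "compact K" unfolding K_def by (intro compact_Times compact_Icc)
    moreover have "continuous_on K f" by (rule continuous_on_subset[OF that]) (auto simp: K_def)
    ultimately have "uniformly_continuous_on K f" by (rule compact_uniformly_continuous[rotated])
    then show ?thesis using \<epsilon> unfolding uniformly_continuous_on_def dist_real_def by blast
  qed
  obtain d1 d2 d3 where d: "0 < d1" "0 < d2" "0 < d3"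
    and ucp: "\<forall>x\<in>K. \<forall>x'\<in>K. dist x' x < d1 \<longrightarrow> \<bar>(\<lambda>(t, p, q, z). lp t p q z) x' - (\<lambda>(t, p, q, z). lp t p q z) x\<bar> < \<epsilon>"
    and ucq: "\<forall>x\<in>K. \<forall>x'\<in>K. dist x' x < d2 \<longrightarrow> \<bar>(\<lambda>(t, p, q, z). lq t p q z) x' - (\<lambda>(t, p, q, z). lq t p q z) x\<bar> < \<epsilon>"
    and ucz: "\<forall>x\<in>K. \<forall>x'\<in>K. dist x' x < d3 \<longrightarrow> \<bar>(\<lambda>(t, p, q, z). lz t p q z) x' - (\<lambda>(t, p, q, z). lz t p q z) x\<bar> < \<epsilon>"
    using uc[OF cp] uc[OF cq] uc[OF cz] by blast
  define \<delta> where "\<delta> = min 1 (min d1 (min d2 d3) / 3)"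
  show thesis
  proof (rule that)
    show "0 < \<delta>" unfolding \<delta>_def using d by simp
    fix t u v w assume t: "t \<in> {a..b}" and u: "\<bar>u\<bar> < \<delta>" and v: "\<bar>v\<bar> < \<delta>" and w: "\<bar>w\<bar> < \<delta>"
    obtain \<xi>1 \<xi>2 \<xi>3 where \<xi>: "\<bar>\<xi>1 - P t\<bar> \<le> \<bar>u\<bar>" "\<bar>\<xi>2 - Q t\<bar> \<le> \<bar>v\<bar>" "\<bar>\<xi>3 - Y t\<bar> \<le> \<bar>w\<bar>"
      "l t (P t + u) (Q t + v) (Y t + w) - l t (P t) (Q t) (Y t)
        = u * lp t \<xi>1 (Q t + v) (Y t + w) + v * lq t (P t) \<xi>2 (Y t + w) + w * lz t (P t) (Q t) \<xi>3"
      using MVT_three_variables[of "l t" "lp t" "lq t" "lz t" "P t" "P t + u" "Q t" "Q t + v" "Y t" "Y t + w"]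
        dp[OF t] dq[OF t] dz[OF t] by auto
    have small: "\<bar>u\<bar> + \<bar>v\<bar> + \<bar>w\<bar> < min d1 (min d2 d3)" "\<bar>u\<bar> < 1" "\<bar>v\<bar> < 1" "\<bar>w\<bar> < 1"
      using u v w unfolding \<delta>_def by linarith+
    have inK: "(t, p, q, z) \<in> K" if "\<bar>p - P t\<bar> < 1" "\<bar>q - Q t\<bar> < 1" "\<bar>z - Y t\<bar> < 1" for p q z
      using that R[OF t] t unfolding K_def by auto
    let ?x = "(t, P t, Q t, Y t)"
    have x: "?x \<in> K" by (rule inK) auto
    have near: "dist (t, p, q, z) ?x < min d1 (min d2 d3)"
      if "\<bar>p - P t\<bar> \<le> \<bar>u\<bar>" "\<bar>q - Q t\<bar> \<le> \<bar>v\<bar>" "\<bar>z - Y t\<bar> \<le> \<bar>w\<bar>" for p q z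
      using dist_Pair3_le[of t p q z "P t" "Q t" "Y t"] that small(1) by linarith
    have e1: "\<bar>lp t \<xi>1 (Q t + v) (Y t + w) - lp t (P t) (Q t) (Y t)\<bar> < \<epsilon>"
      using ucp x inK[of \<xi>1 "Q t + v" "Y t + w"] near[of \<xi>1 "Q t + v" "Y t + w"] \<xi> small by force
    have e2: "\<bar>lq t (P t) \<xi>2 (Y t + w) - lq t (P t) (Q t) (Y t)\<bar> < \<epsilon>"
      using ucq x inK[of "P t" \<xi>2 "Y t + w"] near[of "P t" \<xi>2 "Y t + w"] \<xi> small by force
    have e3: "\<bar>lz t (P t) (Q t) \<xi>3 - lz t (P t) (Q t) (Y t)\<bar> < \<epsilon>"
      using ucz x inK[of "P t" "Q t" \<xi>3] near[of "P t" "Q t" \<xi>3] \<xi> small by force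
    have "\<bar>u * (lp t \<xi>1 (Q t + v) (Y t + w) - lp t (P t) (Q t) (Y t))\<bar> \<le> \<bar>u\<bar> * \<epsilon>"
      "\<bar>v * (lq t (P t) \<xi>2 (Y t + w) - lq t (P t) (Q t) (Y t))\<bar> \<le> \<bar>v\<bar> * \<epsilon>"
      "\<bar>w * (lz t (P t) (Q t) \<xi>3 - lz t (P t) (Q t) (Y t))\<bar> \<le> \<bar>w\<bar> * \<epsilon>"
      using e1 e2 e3 unfolding abs_mult by (auto intro!: mult_left_mono)
    then show "\<bar>l t (P t + u) (Q t + v) (Y t + w) - l t (P t) (Q t) (Y t)
        - (u * lp t (P t) (Q t) (Y t) + v * lq t (P t) (Q t) (Y t) + w * lz t (P t) (Q t) (Y t))\<bar>
      \<le> \<epsilon> * (\<bar>u\<bar> + \<bar>v\<bar> + \<bar>w\<bar>)"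
      unfolding \<xi>(4) by (simp add: algebra_simps) linarith
  qed
qed

lemma gronwall_inequality:
  fixes u :: "real \<Rightarrow> real"
  assumes "continuous_on {a..T} u" "K \<ge> 0"
    and le: "\<And>t. t \<in> {a..T} \<Longrightarrow> u t \<le> C + K * integral {a..t} u"
    and t: "t \<in> {a..T}"
  shows "u t \<le> C * exp (K * (t - a))"
proof -
  define v where "v s = C + K * integral {a..s} u" for s
  define w where "w s = exp (- K * (s - a)) * v s" for s
  define w' where "w' s = exp (- K * (s - a)) * (K * u s - K * v s)" for s
  have dv: "(v has_real_derivative K * u s) (at s within {a..T})" if "s \<in> {a..T}" for s
    unfolding v_def using integral_has_real_derivative[OF assms(1) that]
    by (auto intro!: derivative_eq_intros)
  have dw: "(w has_vector_derivative w' s) (at s within {a..t})" if "s \<in> {a..t}" for s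
  proof -
    have sT: "s \<in> {a..T}" using that t by auto
    have "(w has_real_derivative w' s) (at s within {a..T})"
      unfolding w_def w'_def by (rule derivative_eq_intros dv[OF sT] refl)+ (simp add: algebra_simps)
    then show ?thesis
      using that t by (auto simp: has_real_derivative_iff_has_vector_derivative
          intro: has_vector_derivative_within_subset)
  qed
  have "w' s \<le> 0" if "s \<in> {a..t}" for s
    using le[of s] that t assms(2) unfolding w'_def v_def
    by (intro mult_nonneg_nonpos) (auto simp: mult_left_mono)
  then have "w t - w a \<le> 0"
    using has_integral_le[OF fundamental_theorem_of_calculus[OF _ dw] has_integral_0] t by auto
  then have "exp (- K * (t - a)) * v t \<le> C" unfolding w_def v_def by simp
  then have "exp (- K * (t - a)) * v t * exp (K * (t - a)) \<le> C * exp (K * (t - a))"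
    by (intro mult_right_mono) auto
  moreover have "exp (- K * (t - a)) * v t * exp (K * (t - a)) = v t"
    by (simp add: mult.commute[of _ "v t"] mult.assoc flip: exp_add)
  ultimately have "v t \<le> C * exp (K * (t - a))" by linarith
  then show ?thesis using le[OF t] unfolding v_def by simp
qed

lemma continuous_bootstrap:
  fixes D :: "real \<Rightarrow> real"
  assumes cD: "continuous_on {a..b} D" and Da: "D a < \<delta>" and C: "C < \<delta>"
    and bound: "\<And>T. T \<in> {a..b} \<Longrightarrow> (\<And>s. s \<in> {a..T} \<Longrightarrow> D s < \<delta>) \<Longrightarrow> D T \<le> C"
    and t: "t \<in> {a..b}"
  shows "D t \<le> C"
proof -
  define S where "S = {s \<in> {a..b}. \<delta> \<le> D s}"
  have "S = {}"
  proof (rule ccontr)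
    assume "S \<noteq> {}"
    have "closed S" unfolding S_def
      by (rule continuous_on_closed_Collect_le) (auto intro: continuous_intros cD)
    moreover have "bdd_below S" unfolding S_def by (auto intro: bdd_belowI[of _ a])
    ultimately have t1: "Inf S \<in> S" using closed_contains_Inf \<open>S \<noteq> {}\<close> by blast
    then have "a < Inf S" using Da unfolding S_def by (metis (mono_tags) atLeastAtMost_iff mem_Collect_eq not_le order_le_less)
    have below: "D s < \<delta>" if "s \<in> {a..<Inf S}" for s
      using cInf_lower[OF _ \<open>bdd_below S\<close>, of s] that t1 unfolding S_def by force
    have "D T \<le> C" if "T \<in> {a..<Inf S}" for T
      by (rule bound) (use that t1 below in \<open>auto simp: S_def\<close>)
    then have "D (Inf S) \<le> C"
      using continuous_le_on_closure[of "{a..<Inf S}" D "Inf S" C] \<open>a < Inf S\<close> t1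
        continuous_on_subset[OF cD] unfolding S_def by auto
    then show False using t1 C unfolding S_def by auto
  qed
  then have "\<forall>s\<in>{a..b}. \<not> \<delta> \<le> D s" unfolding S_def by blast
  then show ?thesis using t by (intro bound) (auto simp: not_le)
qed

lemma abs_lin3_le:
  fixes x1 x2 x3 y1 y2 y3 M :: real
  assumes "\<bar>y1\<bar> + \<bar>y2\<bar> + \<bar>y3\<bar> \<le> M"
  shows "\<bar>x1 * y1 + x2 * y2 + x3 * y3\<bar> \<le> M * (\<bar>x1\<bar> + \<bar>x2\<bar> + \<bar>x3\<bar>)"
proof -
  have "\<bar>x1 * y1 + x2 * y2 + x3 * y3\<bar> \<le> \<bar>x1\<bar> * \<bar>y1\<bar> + \<bar>x2\<bar> * \<bar>y2\<bar> + \<bar>x3\<bar> * \<bar>y3\<bar>"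
    unfolding abs_mult[symmetric] by (rule order_trans[OF abs_triangle_ineq add_right_mono[OF abs_triangle_ineq]])
  also have "\<dots> \<le> \<bar>x1\<bar> * M + \<bar>x2\<bar> * M + \<bar>x3\<bar> * M"
    using assms by (intro add_mono mult_left_mono) auto
  finally show ?thesis by (simp add: algebra_simps)
qed
locale parametrized_ode =
  fixes a b :: real and l lp lq lz :: "real \<Rightarrow> real \<Rightarrow> real \<Rightarrow> real \<Rightarrow> real"
    and P Q E DE :: "real \<Rightarrow> real" and y :: "real \<Rightarrow> real \<Rightarrow> real"
  assumes ab: "a < b"
    and dp: "\<And>t p q z. t \<in> {a..b} \<Longrightarrow> ((\<lambda>s. l t s q z) has_real_derivative lp t p q z) (at p)"
    and dq: "\<And>t p q z. t \<in> {a..b} \<Longrightarrow> ((\<lambda>s. l t p s z) has_real_derivative lq t p q z) (at q)"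
    and dz: "\<And>t p q z. t \<in> {a..b} \<Longrightarrow> ((\<lambda>s. l t p q s) has_real_derivative lz t p q z) (at z)"
    and cp: "continuous_on ({a..b} \<times> UNIV) (\<lambda>(t, p, q, z). lp t p q z)"
    and cq: "continuous_on ({a..b} \<times> UNIV) (\<lambda>(t, p, q, z). lq t p q z)"
    and cz: "continuous_on ({a..b} \<times> UNIV) (\<lambda>(t, p, q, z). lz t p q z)"
    and cP: "continuous_on {a..b} P" and cQ: "continuous_on {a..b} Q"
    and cE: "continuous_on {a..b} E" and cDE: "continuous_on {a..b} DE"
    and y_init: "\<And>\<epsilon>. y \<epsilon> a = y 0 a"
    and y_ode: "\<And>\<epsilon> t. t \<in> {a..b} \<Longrightarrow>
       (y \<epsilon> has_real_derivative l t (P t + \<epsilon> * E t) (Q t + \<epsilon> * DE t) (y \<epsilon> t)) (at t within {a..b})"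
begin

lemma continuous_solution: "continuous_on {a..b} (y \<epsilon>)"
  using y_ode DERIV_continuous continuous_on_eq_continuous_within by blast

lemma continuous_along_solution:
  assumes "continuous_on ({a..b} \<times> UNIV) (\<lambda>(t, p, q, z). f t p q z)"
  shows "continuous_on {a..b} (\<lambda>t. f t (P t) (Q t) (y 0 t))"
proof -
  have "continuous_on {a..b} (\<lambda>t. (t, P t, Q t, y 0 t))"
    by (intro continuous_intros cP cQ continuous_solution)
  from continuous_on_compose2[OF assms this] show ?thesis by auto
qed

lemma increment_has_derivative:
  assumes "t \<in> {a..b}"
  shows "((\<lambda>t. y \<epsilon> t - y 0 t) has_real_derivative
     l t (P t + \<epsilon> * E t) (Q t + \<epsilon> * DE t) (y \<epsilon> t) - l t (P t) (Q t) (y 0 t)) (at t within {a..b})"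
  using DERIV_diff[OF y_ode[OF assms, of \<epsilon>] y_ode[OF assms, of 0]] by simp

lemma bounded_directions:
  obtains B where "0 \<le> B" "\<And>t. t \<in> {a..b} \<Longrightarrow> \<bar>E t\<bar> \<le> B \<and> \<bar>DE t\<bar> \<le> B"
proof -
  obtain B1 where "\<And>t. t \<in> {a..b} \<Longrightarrow> norm (E t) \<le> B1"
    using continuous_on_compact_bound[OF compact_Icc cE] by blast
  moreover obtain B2 where "\<And>t. t \<in> {a..b} \<Longrightarrow> norm (DE t) \<le> B2"
    using continuous_on_compact_bound[OF compact_Icc cDE] by blast
  ultimately show thesis
    by (intro that[of "max 0 (max B1 B2)"]) (auto intro: le_max_iff_disj[THEN iffD2])
qed

lemma increment_bound:
  obtains K \<delta> where "0 \<le> K" "0 < \<delta>"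
    "\<And>t u v w. t \<in> {a..b} \<Longrightarrow> \<bar>u\<bar> < \<delta> \<Longrightarrow> \<bar>v\<bar> < \<delta> \<Longrightarrow> \<bar>w\<bar> < \<delta> \<Longrightarrow>
      \<bar>l t (P t + u) (Q t + v) (y 0 t + w) - l t (P t) (Q t) (y 0 t)\<bar> \<le> K * (\<bar>u\<bar> + \<bar>v\<bar> + \<bar>w\<bar>)"
proof -
  have "continuous_on {a..b} (\<lambda>t. \<bar>lp t (P t) (Q t) (y 0 t)\<bar> + \<bar>lq t (P t) (Q t) (y 0 t)\<bar> + \<bar>lz t (P t) (Q t) (y 0 t)\<bar>)"
    by (intro continuous_intros continuous_along_solution cp cq cz)
  then obtain M where "\<And>t. t \<in> {a..b} \<Longrightarrow>
      norm (\<bar>lp t (P t) (Q t) (y 0 t)\<bar> + \<bar>lq t (P t) (Q t) (y 0 t)\<bar> + \<bar>lz t (P t) (Q t) (y 0 t)\<bar>) \<le> M"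
    using continuous_on_compact_bound[OF compact_Icc] by blast
  then have M: "\<bar>lp t (P t) (Q t) (y 0 t)\<bar> + \<bar>lq t (P t) (Q t) (y 0 t)\<bar> + \<bar>lz t (P t) (Q t) (y 0 t)\<bar> \<le> \<bar>M\<bar>"
    if "t \<in> {a..b}" for t
    using that by force
  obtain \<delta> where \<delta>: "0 < \<delta>" and expand: "\<And>t u v w. t \<in> {a..b} \<Longrightarrow> \<bar>u\<bar> < \<delta> \<Longrightarrow> \<bar>v\<bar> < \<delta> \<Longrightarrow> \<bar>w\<bar> < \<delta> \<Longrightarrow>
      \<bar>l t (P t + u) (Q t + v) (y 0 t + w) - l t (P t) (Q t) (y 0 t)
        - (u * lp t (P t) (Q t) (y 0 t) + v * lq t (P t) (Q t) (y 0 t) + w * lz t (P t) (Q t) (y 0 t))\<bar>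
      \<le> 1 * (\<bar>u\<bar> + \<bar>v\<bar> + \<bar>w\<bar>)"
    using uniform_first_order_expansion[OF dp dq dz cp cq cz cP cQ continuous_solution zero_less_one] by blast
  show thesis
  proof (rule that[of "\<bar>M\<bar> + 1" \<delta>])
    fix t u v w assume t: "t \<in> {a..b}" and uvw: "\<bar>u\<bar> < \<delta>" "\<bar>v\<bar> < \<delta>" "\<bar>w\<bar> < \<delta>"
    let ?lin = "u * lp t (P t) (Q t) (y 0 t) + v * lq t (P t) (Q t) (y 0 t) + w * lz t (P t) (Q t) (y 0 t)"
    let ?\<Delta> = "l t (P t + u) (Q t + v) (y 0 t + w) - l t (P t) (Q t) (y 0 t)"
    have "\<bar>?lin\<bar> \<le> \<bar>M\<bar> * (\<bar>u\<bar> + \<bar>v\<bar> + \<bar>w\<bar>)" by (rule abs_lin3_le[OF M[OF t]])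
    moreover have "\<bar>?\<Delta> - ?lin\<bar> \<le> 1 * (\<bar>u\<bar> + \<bar>v\<bar> + \<bar>w\<bar>)" by (rule expand[OF t uvw])
    ultimately show "\<bar>?\<Delta>\<bar> \<le> (\<bar>M\<bar> + 1) * (\<bar>u\<bar> + \<bar>v\<bar> + \<bar>w\<bar>)"
      using abs_triangle_ineq[of "?\<Delta> - ?lin" ?lin] by (simp add: algebra_simps)
  qed (use \<delta> in auto)
qed

lemma solution_lipschitz_in_parameter:
  obtains A \<epsilon>0 where "0 \<le> A" "0 < \<epsilon>0"
    "\<And>\<epsilon> t. \<bar>\<epsilon>\<bar> < \<epsilon>0 \<Longrightarrow> t \<in> {a..b} \<Longrightarrow> \<bar>y \<epsilon> t - y 0 t\<bar> \<le> A * \<bar>\<epsilon>\<bar>"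
proof -
  obtain B where B: "0 \<le> B" "\<And>t. t \<in> {a..b} \<Longrightarrow> \<bar>E t\<bar> \<le> B \<and> \<bar>DE t\<bar> \<le> B"
    using bounded_directions by blast
  obtain K \<delta> where K: "0 \<le> K" and \<delta>: "0 < \<delta>" and increment: "\<And>t u v w. t \<in> {a..b} \<Longrightarrow>
      \<bar>u\<bar> < \<delta> \<Longrightarrow> \<bar>v\<bar> < \<delta> \<Longrightarrow> \<bar>w\<bar> < \<delta> \<Longrightarrow>
      \<bar>l t (P t + u) (Q t + v) (y 0 t + w) - l t (P t) (Q t) (y 0 t)\<bar> \<le> K * (\<bar>u\<bar> + \<bar>v\<bar> + \<bar>w\<bar>)"
    using increment_bound by blast
  define A where "A = K * (2 * B) * (b - a) * exp (K * (b - a))"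
  have A: "0 \<le> A" unfolding A_def using K B(1) ab by simp
  define \<epsilon>0 where "\<epsilon>0 = \<delta> / (B + A + 1)"
  show thesis
  proof (rule that[OF A])
    show "0 < \<epsilon>0" unfolding \<epsilon>0_def using \<delta> A B(1) by simp
    fix \<epsilon> t assume \<epsilon>: "\<bar>\<epsilon>\<bar> < \<epsilon>0" and t: "t \<in> {a..b}"
    have "(B + A + 1) * \<bar>\<epsilon>\<bar> < \<delta>" using \<epsilon> A B(1) unfolding \<epsilon>0_def by (simp add: field_simps)
    moreover have "B * \<bar>\<epsilon>\<bar> \<le> (B + A + 1) * \<bar>\<epsilon>\<bar>" "A * \<bar>\<epsilon>\<bar> \<le> (B + A + 1) * \<bar>\<epsilon>\<bar>"
      using A B(1) by (intro mult_right_mono; simp)+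
    ultimately have \<epsilon>B: "B * \<bar>\<epsilon>\<bar> < \<delta>" and \<epsilon>A: "A * \<bar>\<epsilon>\<bar> < \<delta>" by linarith+
    define D where "D t = y \<epsilon> t - y 0 t" for t
    have cD: "continuous_on {a..b} D" unfolding D_def by (intro continuous_intros continuous_solution)
    have D_a: "D a = 0" unfolding D_def using y_init by simp
    have step: "\<bar>l s (P s + \<epsilon> * E s) (Q s + \<epsilon> * DE s) (y \<epsilon> s) - l s (P s) (Q s) (y 0 s)\<bar>
        \<le> K * (2 * B) * \<bar>\<epsilon>\<bar> + K * \<bar>D s\<bar>" if s: "s \<in> {a..b}" and Ds: "\<bar>D s\<bar> < \<delta>" for s
    proof -
      have u: "\<bar>\<epsilon> * E s\<bar> \<le> B * \<bar>\<epsilon>\<bar>"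
        using mult_right_mono[OF conjunct1[OF B(2)[OF s]] abs_ge_zero[of \<epsilon>]] by (simp add: abs_mult mult.commute)
      have v: "\<bar>\<epsilon> * DE s\<bar> \<le> B * \<bar>\<epsilon>\<bar>"
        using mult_right_mono[OF conjunct2[OF B(2)[OF s]] abs_ge_zero[of \<epsilon>]] by (simp add: abs_mult mult.commute)
      have "\<bar>l s (P s + \<epsilon> * E s) (Q s + \<epsilon> * DE s) (y 0 s + D s) - l s (P s) (Q s) (y 0 s)\<bar>
          \<le> K * (\<bar>\<epsilon> * E s\<bar> + \<bar>\<epsilon> * DE s\<bar> + \<bar>D s\<bar>)"
        by (rule increment[OF s order_le_less_trans[OF u \<epsilon>B] order_le_less_trans[OF v \<epsilon>B] Ds])
      also have "\<dots> \<le> K * (2 * B) * \<bar>\<epsilon>\<bar> + K * \<bar>D s\<bar>"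
        using mult_left_mono[OF add_mono[OF u v] K] by (simp add: algebra_simps)
      finally show ?thesis unfolding D_def by simp
    qed
    have "\<bar>D t\<bar> \<le> A * \<bar>\<epsilon>\<bar>"
    proof (rule continuous_bootstrap[where D = "\<lambda>t. \<bar>D t\<bar>", OF _ _ \<epsilon>A _ t])
      show "continuous_on {a..b} (\<lambda>t. \<bar>D t\<bar>)" by (intro continuous_intros cD)
      show "\<bar>D a\<bar> < \<delta>" using D_a \<delta> by simp
      fix T assume T: "T \<in> {a..b}" and small: "\<And>s. s \<in> {a..T} \<Longrightarrow> \<bar>D s\<bar> < \<delta>"
      have sub: "{a..T} \<subseteq> {a..b}" using T by auto
      have cDT: "continuous_on {a..T} (\<lambda>t. \<bar>D t\<bar>)" by (intro continuous_intros continuous_on_subset[OF cD sub])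
      have integral_ineq: "\<bar>D s\<bar> \<le> K * (2 * B) * \<bar>\<epsilon>\<bar> * (T - a) + K * integral {a..s} (\<lambda>t. \<bar>D t\<bar>)"
        if s: "s \<in> {a..T}" for s
      proof -
        have ftc: "((\<lambda>t. l t (P t + \<epsilon> * E t) (Q t + \<epsilon> * DE t) (y \<epsilon> t) - l t (P t) (Q t) (y 0 t))
            has_integral (D s - D a)) {a..s}"
          using s sub unfolding D_def
          by (intro fundamental_theorem_of_calculus)
             (auto simp: has_real_derivative_iff_has_vector_derivative[symmetric]
               intro!: DERIV_subset[OF increment_has_derivative])
        have int: "(\<lambda>t. K * (2 * B) * \<bar>\<epsilon>\<bar> + K * \<bar>D t\<bar>) integrable_on {a..s}"
          using s by (intro integrable_continuous_real continuous_intros continuous_on_subset[OF cDT]) auto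
        have "\<bar>D s\<bar> \<le> integral {a..s} (\<lambda>t. K * (2 * B) * \<bar>\<epsilon>\<bar> + K * \<bar>D t\<bar>)"
          using integral_norm_bound_integral[OF has_integral_integrable[OF ftc] int] step small s sub
            integral_unique[OF ftc] D_a by (auto simp: subset_iff)
        also have "\<dots> = K * (2 * B) * \<bar>\<epsilon>\<bar> * (s - a) + K * integral {a..s} (\<lambda>t. \<bar>D t\<bar>)"
          using s by (subst integral_add)
            (auto intro!: integrable_continuous_real continuous_intros continuous_on_subset[OF cDT])
        also have "\<dots> \<le> K * (2 * B) * \<bar>\<epsilon>\<bar> * (T - a) + K * integral {a..s} (\<lambda>t. \<bar>D t\<bar>)"
          using s K B(1) by (auto intro!: mult_left_mono)
        finally show ?thesis .
      qed
      have "\<bar>D T\<bar> \<le> K * (2 * B) * \<bar>\<epsilon>\<bar> * (T - a) * exp (K * (T - a))"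
        by (rule gronwall_inequality[OF cDT K integral_ineq]) (use T in auto)
      also have "\<dots> \<le> K * (2 * B) * \<bar>\<epsilon>\<bar> * ((b - a) * exp (K * (b - a)))"
      proof -
        have "(T - a) * exp (K * (T - a)) \<le> (b - a) * exp (K * (b - a))"
          using T K by (intro mult_mono) (auto intro: mult_left_mono)
        then show ?thesis using K B(1) by (simp add: mult.assoc mult_left_mono)
      qed
      also have "\<dots> = A * \<bar>\<epsilon>\<bar>" unfolding A_def by (simp only: ac_simps)
      finally show "\<bar>D T\<bar> \<le> A * \<bar>\<epsilon>\<bar>" .
    qed
    then show "\<bar>y \<epsilon> t - y 0 t\<bar> \<le> A * \<bar>\<epsilon>\<bar>" unfolding D_def .
  qed
qed

definition integrating_factor :: "real \<Rightarrow> real" where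
  "integrating_factor t = exp (- integral {a..t} (\<lambda>\<tau>. lz \<tau> (P \<tau>) (Q \<tau>) (y 0 \<tau>)))"

definition variation_density :: "real \<Rightarrow> real" where
  "variation_density t = integrating_factor t * (lp t (P t) (Q t) (y 0 t) * E t + lq t (P t) (Q t) (y 0 t) * DE t)"

definition linearization_error :: "real \<Rightarrow> real \<Rightarrow> real" where
  "linearization_error \<epsilon> t = l t (P t + \<epsilon> * E t) (Q t + \<epsilon> * DE t) (y \<epsilon> t) - l t (P t) (Q t) (y 0 t)
     - (\<epsilon> * E t * lp t (P t) (Q t) (y 0 t) + \<epsilon> * DE t * lq t (P t) (Q t) (y 0 t)
        + (y \<epsilon> t - y 0 t) * lz t (P t) (Q t) (y 0 t))"

lemma integrating_factor_pos: "0 < integrating_factor t"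
  unfolding integrating_factor_def by simp

lemma integrating_factor_has_derivative:
  assumes "t \<in> {a..b}"
  shows "(integrating_factor has_real_derivative - lz t (P t) (Q t) (y 0 t) * integrating_factor t) (at t within {a..b})"
  unfolding integrating_factor_def
  by (rule derivative_eq_intros integral_has_real_derivative[OF continuous_along_solution[OF cz] assms] refl)+
    simp

lemma continuous_integrating_factor: "continuous_on {a..b} integrating_factor"
  using integrating_factor_has_derivative DERIV_continuous continuous_on_eq_continuous_within by blast

lemma continuous_variation_density: "continuous_on {a..b} variation_density"
  unfolding variation_density_def
  by (intro continuous_intros continuous_integrating_factor cE cDE continuous_along_solution cp cq)

lemma scaled_quotient_identity:
  assumes \<epsilon>: "\<epsilon> \<noteq> 0"
  shows "(\<lambda>t. integrating_factor t / \<epsilon> * linearization_error \<epsilon> t) integrable_on {a..b}"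
    and "integrating_factor b * ((y \<epsilon> b - y 0 b) / \<epsilon>) - integral {a..b} variation_density
      = integral {a..b} (\<lambda>t. integrating_factor t / \<epsilon> * linearization_error \<epsilon> t)"
proof -
  define \<Delta> where "\<Delta> t = (y \<epsilon> t - y 0 t) / \<epsilon>" for t
  define G' where "G' t = variation_density t + integrating_factor t / \<epsilon> * linearization_error \<epsilon> t" for t
  have "((\<lambda>t. integrating_factor t * \<Delta> t) has_vector_derivative G' t) (at t within {a..b})" if t: "t \<in> {a..b}" for t
  proof -
    define F where "F = l t (P t + \<epsilon> * E t) (Q t + \<epsilon> * DE t) (y \<epsilon> t) - l t (P t) (Q t) (y 0 t)"
    have "(\<Delta> has_real_derivative F / \<epsilon>) (at t within {a..b})"
      unfolding \<Delta>_def F_def by (intro DERIV_cdivide increment_has_derivative t)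
    from DERIV_mult[OF integrating_factor_has_derivative[OF t] this]
    have d: "((\<lambda>t. integrating_factor t * \<Delta> t) has_real_derivative
        - lz t (P t) (Q t) (y 0 t) * integrating_factor t * \<Delta> t + F / \<epsilon> * integrating_factor t) (at t within {a..b})" .
    have "- lz t (P t) (Q t) (y 0 t) * integrating_factor t * \<Delta> t + F / \<epsilon> * integrating_factor t = G' t"
      unfolding G'_def \<Delta>_def F_def variation_density_def linearization_error_def
      using \<epsilon> by (simp add: field_simps)
    with d show ?thesis by (simp add: has_real_derivative_iff_has_vector_derivative)
  qed
  then have ftc: "(G' has_integral (integrating_factor b * \<Delta> b)) {a..b}"
    using fundamental_theorem_of_calculus[of a b "\<lambda>t. integrating_factor t * \<Delta> t" G'] ab
    by (simp add: \<Delta>_def y_init[of \<epsilon>])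
  have vd: "variation_density integrable_on {a..b}"
    using continuous_variation_density integrable_continuous_real by blast
  have eq: "(\<lambda>t. integrating_factor t / \<epsilon> * linearization_error \<epsilon> t) = (\<lambda>t. G' t - variation_density t)"
    unfolding G'_def by simp
  show "(\<lambda>t. integrating_factor t / \<epsilon> * linearization_error \<epsilon> t) integrable_on {a..b}"
    unfolding eq by (rule integrable_diff[OF has_integral_integrable[OF ftc] vd])
  show "integrating_factor b * ((y \<epsilon> b - y 0 b) / \<epsilon>) - integral {a..b} variation_density
      = integral {a..b} (\<lambda>t. integrating_factor t / \<epsilon> * linearization_error \<epsilon> t)"
    unfolding eq integral_diff[OF has_integral_integrable[OF ftc] vd] integral_unique[OF ftc] \<Delta>_def ..
qed

lemma scaled_quotient_estimate:
  assumes r: "0 < r"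
  obtains s where "0 < s" "\<And>\<epsilon>. \<epsilon> \<noteq> 0 \<Longrightarrow> \<bar>\<epsilon>\<bar> < s \<Longrightarrow>
    \<bar>integrating_factor b * ((y \<epsilon> b - y 0 b) / \<epsilon>) - integral {a..b} variation_density\<bar> < r"
proof -
  obtain Mw where Mw: "\<And>t. t \<in> {a..b} \<Longrightarrow> norm (integrating_factor t) \<le> Mw"
    using continuous_on_compact_bound[OF compact_Icc continuous_integrating_factor] by blast
  have Mw0: "0 \<le> Mw" using Mw[of a] ab by (auto intro: order_trans[OF norm_ge_zero])
  obtain B where B: "0 \<le> B" "\<And>t. t \<in> {a..b} \<Longrightarrow> \<bar>E t\<bar> \<le> B \<and> \<bar>DE t\<bar> \<le> B"
    using bounded_directions by blast
  obtain A \<epsilon>0 where A: "0 \<le> A" "0 < \<epsilon>0"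
    and lip: "\<And>\<epsilon> t. \<bar>\<epsilon>\<bar> < \<epsilon>0 \<Longrightarrow> t \<in> {a..b} \<Longrightarrow> \<bar>y \<epsilon> t - y 0 t\<bar> \<le> A * \<bar>\<epsilon>\<bar>"
    using solution_lipschitz_in_parameter by blast
  define W where "W = (b - a) * Mw * (2 * B + A) + 1"
  have W: "0 < W" unfolding W_def using ab Mw0 B(1) A(1) by (simp add: add_nonneg_pos)
  define \<eta> where "\<eta> = r / W"
  have \<eta>: "0 < \<eta>" unfolding \<eta>_def using r W by simp
  obtain \<delta> where \<delta>: "0 < \<delta>" and expand: "\<And>t u v w. t \<in> {a..b} \<Longrightarrow> \<bar>u\<bar> < \<delta> \<Longrightarrow> \<bar>v\<bar> < \<delta> \<Longrightarrow> \<bar>w\<bar> < \<delta> \<Longrightarrow>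
      \<bar>l t (P t + u) (Q t + v) (y 0 t + w) - l t (P t) (Q t) (y 0 t)
        - (u * lp t (P t) (Q t) (y 0 t) + v * lq t (P t) (Q t) (y 0 t) + w * lz t (P t) (Q t) (y 0 t))\<bar>
      \<le> \<eta> * (\<bar>u\<bar> + \<bar>v\<bar> + \<bar>w\<bar>)"
    using uniform_first_order_expansion[OF dp dq dz cp cq cz cP cQ continuous_solution \<eta>] by blast
  show thesis
  proof (rule that[of "min \<epsilon>0 (\<delta> / (B + A + 1))"])
    show "0 < min \<epsilon>0 (\<delta> / (B + A + 1))" using A \<delta> B(1) by simp
    fix \<epsilon> :: real assume \<epsilon>0: "\<epsilon> \<noteq> 0" and "\<bar>\<epsilon>\<bar> < min \<epsilon>0 (\<delta> / (B + A + 1))"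
    then have \<epsilon>: "\<bar>\<epsilon>\<bar> < \<epsilon>0" "(B + A + 1) * \<bar>\<epsilon>\<bar> < \<delta>"
      using A B(1) by (auto simp: field_simps)
    moreover have "B * \<bar>\<epsilon>\<bar> \<le> (B + A + 1) * \<bar>\<epsilon>\<bar>" "A * \<bar>\<epsilon>\<bar> \<le> (B + A + 1) * \<bar>\<epsilon>\<bar>"
      using A B(1) by (intro mult_right_mono; simp)+
    ultimately have \<epsilon>B: "B * \<bar>\<epsilon>\<bar> < \<delta>" and \<epsilon>A: "A * \<bar>\<epsilon>\<bar> < \<delta>" by linarith+
    have pointwise: "norm (integrating_factor t / \<epsilon> * linearization_error \<epsilon> t) \<le> Mw * (\<eta> * (2 * B + A))"
      if t: "t \<in> {a..b}" for t
    proof -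
      have u: "\<bar>\<epsilon> * E t\<bar> \<le> B * \<bar>\<epsilon>\<bar>"
        using mult_right_mono[OF conjunct1[OF B(2)[OF t]] abs_ge_zero[of \<epsilon>]] by (simp add: abs_mult mult.commute)
      have v: "\<bar>\<epsilon> * DE t\<bar> \<le> B * \<bar>\<epsilon>\<bar>"
        using mult_right_mono[OF conjunct2[OF B(2)[OF t]] abs_ge_zero[of \<epsilon>]] by (simp add: abs_mult mult.commute)
      have w: "\<bar>y \<epsilon> t - y 0 t\<bar> \<le> A * \<bar>\<epsilon>\<bar>" using lip[OF \<epsilon>(1) t] .
      have "\<bar>linearization_error \<epsilon> t\<bar> \<le> \<eta> * (\<bar>\<epsilon> * E t\<bar> + \<bar>\<epsilon> * DE t\<bar> + \<bar>y \<epsilon> t - y 0 t\<bar>)"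
        using expand[OF t order_le_less_trans[OF u \<epsilon>B] order_le_less_trans[OF v \<epsilon>B]
            order_le_less_trans[OF w \<epsilon>A]] unfolding linearization_error_def by simp
      also have "\<dots> \<le> \<eta> * (\<bar>\<epsilon>\<bar> * (2 * B + A))"
        using u v w \<eta> by (intro mult_left_mono) (auto simp: algebra_simps)
      finally have "\<bar>linearization_error \<epsilon> t\<bar> \<le> \<eta> * (\<bar>\<epsilon>\<bar> * (2 * B + A))" .
      then have "norm (integrating_factor t / \<epsilon> * linearization_error \<epsilon> t) \<le> Mw / \<bar>\<epsilon>\<bar> * (\<eta> * (\<bar>\<epsilon>\<bar> * (2 * B + A)))"
        unfolding real_norm_def abs_mult abs_divide
        using Mw[OF t] by (intro mult_mono divide_right_mono) auto
      also have "\<dots> = Mw * (\<eta> * (2 * B + A))" using \<epsilon>0 by simp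
      finally show ?thesis .
    qed
    have "norm (integral {a..b} (\<lambda>t. integrating_factor t / \<epsilon> * linearization_error \<epsilon> t))
        \<le> integral {a..b} (\<lambda>t. Mw * (\<eta> * (2 * B + A)))"
      by (rule integral_norm_bound_integral[OF scaled_quotient_identity(1)[OF \<epsilon>0]]) (use pointwise in auto)
    also have "\<dots> = \<eta> * (W - 1)" using ab unfolding W_def by (simp add: algebra_simps)
    also have "\<dots> < r" using \<eta> W unfolding \<eta>_def by (simp add: field_simps)
    finally show "\<bar>integrating_factor b * ((y \<epsilon> b - y 0 b) / \<epsilon>) - integral {a..b} variation_density\<bar> < r"
      unfolding scaled_quotient_identity(2)[OF \<epsilon>0] by simp
  qed
qed

lemma endpoint_has_derivative:
  "((\<lambda>\<epsilon>. y \<epsilon> b) has_real_derivative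
      integral {a..b} (\<lambda>t. exp (- integral {a..t} (\<lambda>\<tau>. lz \<tau> (P \<tau>) (Q \<tau>) (y 0 \<tau>)))
          * (lp t (P t) (Q t) (y 0 t) * E t + lq t (P t) (Q t) (y 0 t) * DE t))
        / exp (- integral {a..b} (\<lambda>\<tau>. lz \<tau> (P \<tau>) (Q \<tau>) (y 0 \<tau>)))) (at 0)"
proof -
  have "((\<lambda>\<epsilon>. (y \<epsilon> b - y 0 b) / (\<epsilon> - 0)) \<longlongrightarrow> integral {a..b} variation_density / integrating_factor b) (at 0)"
    unfolding LIM_eq
  proof (intro allI impI)
    fix r :: real assume "0 < r"
    then obtain s where s: "0 < s" and est: "\<And>\<epsilon>. \<epsilon> \<noteq> 0 \<Longrightarrow> \<bar>\<epsilon>\<bar> < s \<Longrightarrow>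
        \<bar>integrating_factor b * ((y \<epsilon> b - y 0 b) / \<epsilon>) - integral {a..b} variation_density\<bar> < r * integrating_factor b"
      using scaled_quotient_estimate[of "r * integrating_factor b"] integrating_factor_pos[of b] by auto
    have "\<bar>(y \<epsilon> b - y 0 b) / \<epsilon> - integral {a..b} variation_density / integrating_factor b\<bar> < r"
      if "\<epsilon> \<noteq> 0" "\<bar>\<epsilon>\<bar> < s" for \<epsilon>
      using est[OF that] integrating_factor_pos[of b] by (simp add: field_simps abs_divide pos_divide_less_eq)
    then show "\<exists>s>0. \<forall>\<epsilon>. \<epsilon> \<noteq> 0 \<and> norm (\<epsilon> - 0) < s \<longrightarrow>
        norm ((y \<epsilon> b - y 0 b) / (\<epsilon> - 0) - integral {a..b} variation_density / integrating_factor b) < r"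
      using s by auto
  qed
  then show ?thesis
    unfolding has_field_derivative_iff variation_density_def integrating_factor_def by simp
qed

end

section \<open>Fractional kernels and Dirichlet's formula\<close>

lemma left_kernel_has_integral:
  fixes a t \<beta> :: real
  assumes "a \<le> t" "0 < \<beta>"
  shows "((\<lambda>\<tau>. (t-\<tau>) powr (\<beta>-1)) has_integral (t-a) powr \<beta> / \<beta>) {a..t}"
proof -
  have "continuous_on {a..t} (\<lambda>\<tau>. (t-\<tau>) powr \<beta>)"
    by (rule continuous_on_powr') (use assms in \<open>auto intro: continuous_intros\<close>)
  then have cont: "continuous_on {a..t} (\<lambda>\<tau>. - ((t-\<tau>) powr \<beta> / \<beta>))"
    using assms by (intro continuous_on_minus continuous_on_divide) auto
  have der: "((\<lambda>\<tau>. - ((t-\<tau>) powr \<beta> / \<beta>)) has_vector_derivative (t-x) powr (\<beta>-1)) (at x)"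
    if x: "x \<in> {a<..<t}" for x
  proof -
    have d1: "((\<lambda>z. z powr \<beta>) has_real_derivative \<beta> * (t-x) powr (\<beta>-1)) (at (t-x))"
      by (rule has_real_derivative_powr) (use x in auto)
    have d2: "((\<lambda>\<tau>. t - \<tau>) has_real_derivative -1) (at x)" by (auto intro!: derivative_eq_intros)
    have "((\<lambda>\<tau>. - ((t-\<tau>) powr \<beta> / \<beta>)) has_real_derivative - (\<beta> * (t-x) powr (\<beta>-1) * -1 / \<beta>)) (at x)"
      by (intro DERIV_minus DERIV_cdivide DERIV_chain2[OF d1 d2])
    then show ?thesis
      using assms by (simp add: has_real_derivative_iff_has_vector_derivative)
  qed
  show ?thesis
    using fundamental_theorem_of_calculus_interior[of a t "\<lambda>\<tau>. - ((t-\<tau>) powr \<beta> / \<beta>)"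
        "\<lambda>\<tau>. (t-\<tau>) powr (\<beta>-1)", OF assms(1) cont der] assms by simp
qed

lemma right_kernel_has_integral:
  fixes b \<tau> \<beta> :: real
  assumes "\<tau> \<le> b" "0 < \<beta>"
  shows "((\<lambda>s. (s-\<tau>) powr (\<beta>-1)) has_integral (b-\<tau>) powr \<beta> / \<beta>) {\<tau>..b}"
proof -
  have "continuous_on {\<tau>..b} (\<lambda>s. (s-\<tau>) powr \<beta>)"
    by (rule continuous_on_powr') (use assms in \<open>auto intro: continuous_intros\<close>)
  then have cont: "continuous_on {\<tau>..b} (\<lambda>s. (s-\<tau>) powr \<beta> / \<beta>)"
    using assms by (intro continuous_on_divide) auto
  have der: "((\<lambda>s. (s-\<tau>) powr \<beta> / \<beta>) has_vector_derivative (x-\<tau>) powr (\<beta>-1)) (at x)"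
    if x: "x \<in> {\<tau><..<b}" for x
  proof -
    have d1: "((\<lambda>z. z powr \<beta>) has_real_derivative \<beta> * (x-\<tau>) powr (\<beta>-1)) (at (x-\<tau>))"
      by (rule has_real_derivative_powr) (use x in auto)
    have d2: "((\<lambda>s. s - \<tau>) has_real_derivative 1) (at x)" by (auto intro!: derivative_eq_intros)
    have "((\<lambda>s. (s-\<tau>) powr \<beta> / \<beta>) has_real_derivative (\<beta> * (x-\<tau>) powr (\<beta>-1) * 1 / \<beta>)) (at x)"
      by (intro DERIV_cdivide DERIV_chain2[OF d1 d2])
    then show ?thesis
      using assms by (simp add: has_real_derivative_iff_has_vector_derivative)
  qed
  show ?thesis
    using fundamental_theorem_of_calculus_interior[of \<tau> b "\<lambda>s. (s-\<tau>) powr \<beta> / \<beta>"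
        "\<lambda>s. (s-\<tau>) powr (\<beta>-1)", OF assms(1) cont der] assms by simp
qed

lemma set_integrable_kernel_mult:
  fixes k w :: "real \<Rightarrow> real"
  assumes k: "k integrable_on {c..d}" "\<And>x. x \<in> {c..d} \<Longrightarrow> 0 \<le> k x" "k \<in> borel_measurable borel"
    and w: "continuous_on {c..d} w"
  shows "set_integrable lborel {c..d} (\<lambda>x. k x * w x)"
    "(LINT x:{c..d}|lborel. k x * w x) = integral {c..d} (\<lambda>x. k x * w x)"
proof -
  have ka: "k absolutely_integrable_on {c..d}"
    using k by (intro absolutely_integrable_integrable_bound[where g=k]) auto
  have "(\<lambda>x. w x * k x) absolutely_integrable_on {c..d}"
  proof (rule absolutely_integrable_bounded_measurable_product_real)
    show "w \<in> borel_measurable (lebesgue_on {c..d})"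
      using w by (intro continuous_imp_measurable_on_sets_lebesgue) auto
    show "bounded (w ` {c..d})" using w by (intro compact_imp_bounded compact_continuous_image) auto
  qed (use ka in auto)
  then have ab: "set_integrable lebesgue {c..d} (\<lambda>x. k x * w x)" by (simp add: mult.commute)
  have mw: "(\<lambda>x. indicator {c..d} x *\<^sub>R w x) \<in> borel_measurable borel"
    by (rule borel_measurable_continuous_on_indicator) (auto intro: w)
  have eq: "(\<lambda>x. indicator {c..d} x *\<^sub>R (k x * w x)) = (\<lambda>x. k x * (indicator {c..d} x *\<^sub>R w x))"
    by (auto simp: indicator_def)
  have meas: "(\<lambda>x. indicator {c..d} x *\<^sub>R (k x * w x)) \<in> borel_measurable lborel"
    unfolding eq using mw k(3) by measurable
  show si: "set_integrable lborel {c..d} (\<lambda>x. k x * w x)"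
    using ab meas unfolding set_integrable_def by (simp add: integrable_completion)
  show "(LINT x:{c..d}|lborel. k x * w x) = integral {c..d} (\<lambda>x. k x * w x)"
    using set_borel_integral_eq_integral(2)[OF si] .
qed

definition triangle_kernel :: "real \<Rightarrow> real \<Rightarrow> real \<Rightarrow> real \<Rightarrow> real \<Rightarrow> real" where
  "triangle_kernel a b \<beta> t \<tau> = (if a \<le> \<tau> \<and> \<tau> \<le> t \<and> t \<le> b then (t-\<tau>) powr (\<beta>-1) else 0)"

definition triangle_integrand :: "real \<Rightarrow> real \<Rightarrow> real \<Rightarrow> (real \<Rightarrow> real) \<Rightarrow> (real \<Rightarrow> real) \<Rightarrow> real \<times> real \<Rightarrow> real" where
  "triangle_integrand a b \<beta> w1 w2 = (\<lambda>(t,\<tau>). triangle_kernel a b \<beta> t \<tau> * (indicator {a..b} \<tau> *\<^sub>R w1 \<tau>) * (indicator {a..b} t *\<^sub>R w2 t))"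

lemma triangle_integrand_measurable:
  assumes "continuous_on {a..b} w1" "continuous_on {a..b} w2"
  shows "triangle_integrand a b \<beta> w1 w2 \<in> borel_measurable (lborel \<Otimes>\<^sub>M lborel)"
proof -
  have m1[measurable]: "(\<lambda>x. indicator {a..b} x *\<^sub>R w1 x) \<in> borel_measurable borel"
    by (rule borel_measurable_continuous_on_indicator) (auto intro: assms)
  have m2[measurable]: "(\<lambda>x. indicator {a..b} x *\<^sub>R w2 x) \<in> borel_measurable borel"
    by (rule borel_measurable_continuous_on_indicator) (auto intro: assms)
  have mk[measurable]: "(\<lambda>(t,\<tau>). triangle_kernel a b \<beta> t \<tau>) \<in> borel_measurable (lborel \<Otimes>\<^sub>M lborel)"
    unfolding triangle_kernel_def by measurable
  show ?thesis unfolding triangle_integrand_def by measurable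
qed

lemma left_kernel_integrable:
  fixes a t \<beta> :: real
  assumes "a \<le> t" "0 < \<beta>" "continuous_on {a..t} w"
  shows "set_integrable lborel {a..t} (\<lambda>\<tau>. (t-\<tau>) powr (\<beta>-1) * w \<tau>)"
    "(LINT \<tau>:{a..t}|lborel. (t-\<tau>) powr (\<beta>-1) * w \<tau>) = integral {a..t} (\<lambda>\<tau>. (t-\<tau>) powr (\<beta>-1) * w \<tau>)"
  using set_integrable_kernel_mult[of "\<lambda>\<tau>. (t-\<tau>) powr (\<beta>-1)" a t w] left_kernel_has_integral[OF assms(1,2)] assms(3)
  by (auto simp: has_integral_integrable)

lemma right_kernel_integrable:
  fixes b \<tau> \<beta> :: real
  assumes "\<tau> \<le> b" "0 < \<beta>" "continuous_on {\<tau>..b} w"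
  shows "set_integrable lborel {\<tau>..b} (\<lambda>t. (t-\<tau>) powr (\<beta>-1) * w t)"
    "(LINT t:{\<tau>..b}|lborel. (t-\<tau>) powr (\<beta>-1) * w t) = integral {\<tau>..b} (\<lambda>t. (t-\<tau>) powr (\<beta>-1) * w t)"
  using set_integrable_kernel_mult[of "\<lambda>t. (t-\<tau>) powr (\<beta>-1)" \<tau> b w] right_kernel_has_integral[OF assms(1,2)] assms(3)
  by (auto simp: has_integral_integrable)

lemma triangle_integrand_left_section:
  assumes ab: "a \<le> b" and \<beta>: "0 < \<beta>" and w1: "continuous_on {a..b} w1" and w2: "continuous_on {a..b} w2"
  shows "integrable lborel (\<lambda>\<tau>. triangle_integrand a b \<beta> w1 w2 (t,\<tau>))"
    "(LINT \<tau>|lborel. triangle_integrand a b \<beta> w1 w2 (t,\<tau>)) = indicator {a..b} t * (w2 t * integral {a..t} (\<lambda>\<tau>. (t-\<tau>) powr (\<beta>-1) * w1 \<tau>))"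
proof -
  have "integrable lborel (\<lambda>\<tau>. triangle_integrand a b \<beta> w1 w2 (t,\<tau>)) \<and>
    (LINT \<tau>|lborel. triangle_integrand a b \<beta> w1 w2 (t,\<tau>)) = indicator {a..b} t * (w2 t * integral {a..t} (\<lambda>\<tau>. (t-\<tau>) powr (\<beta>-1) * w1 \<tau>))"
  proof (cases "t \<in> {a..b}")
    case True
    have eq: "(\<lambda>\<tau>. triangle_integrand a b \<beta> w1 w2 (t,\<tau>)) = (\<lambda>\<tau>. w2 t * (indicator {a..t} \<tau> *\<^sub>R ((t-\<tau>) powr (\<beta>-1) * w1 \<tau>)))"
      using True by (auto simp: triangle_integrand_def triangle_kernel_def indicator_def fun_eq_iff)
    have c1: "continuous_on {a..t} w1" using True by (auto intro: continuous_on_subset[OF w1])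
    note k = left_kernel_integrable[of a t \<beta> w1, OF _ \<beta> c1]
    show ?thesis unfolding eq using True k
      by (auto simp: set_integrable_def set_lebesgue_integral_def)
  next
    case False
    then have eq: "(\<lambda>\<tau>. triangle_integrand a b \<beta> w1 w2 (t,\<tau>)) = (\<lambda>\<tau>. 0)"
      by (auto simp: triangle_integrand_def triangle_kernel_def indicator_def fun_eq_iff)
    show ?thesis unfolding eq using False by simp
  qed
  then show "integrable lborel (\<lambda>\<tau>. triangle_integrand a b \<beta> w1 w2 (t,\<tau>))"
    "(LINT \<tau>|lborel. triangle_integrand a b \<beta> w1 w2 (t,\<tau>)) = indicator {a..b} t * (w2 t * integral {a..t} (\<lambda>\<tau>. (t-\<tau>) powr (\<beta>-1) * w1 \<tau>))"
    by auto
qed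

lemma triangle_integrand_right_section:
  assumes ab: "a \<le> b" and \<beta>: "0 < \<beta>" and w1: "continuous_on {a..b} w1" and w2: "continuous_on {a..b} w2"
  shows "integrable lborel (\<lambda>t. triangle_integrand a b \<beta> w1 w2 (t,\<tau>))"
    "(LINT t|lborel. triangle_integrand a b \<beta> w1 w2 (t,\<tau>)) = indicator {a..b} \<tau> * (w1 \<tau> * integral {\<tau>..b} (\<lambda>t. (t-\<tau>) powr (\<beta>-1) * w2 t))"
proof -
  have "integrable lborel (\<lambda>t. triangle_integrand a b \<beta> w1 w2 (t,\<tau>)) \<and>
    (LINT t|lborel. triangle_integrand a b \<beta> w1 w2 (t,\<tau>)) = indicator {a..b} \<tau> * (w1 \<tau> * integral {\<tau>..b} (\<lambda>t. (t-\<tau>) powr (\<beta>-1) * w2 t))"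
  proof (cases "\<tau> \<in> {a..b}")
    case True
    have eq: "(\<lambda>t. triangle_integrand a b \<beta> w1 w2 (t,\<tau>)) = (\<lambda>t. w1 \<tau> * (indicator {\<tau>..b} t *\<^sub>R ((t-\<tau>) powr (\<beta>-1) * w2 t)))"
      using True by (auto simp: triangle_integrand_def triangle_kernel_def indicator_def fun_eq_iff)
    have c2: "continuous_on {\<tau>..b} w2" using True by (auto intro: continuous_on_subset[OF w2])
    note k = right_kernel_integrable[of \<tau> b \<beta> w2, OF _ \<beta> c2]
    show ?thesis unfolding eq using True k
      by (auto simp: set_integrable_def set_lebesgue_integral_def)
  next
    case False
    then have eq: "(\<lambda>t. triangle_integrand a b \<beta> w1 w2 (t,\<tau>)) = (\<lambda>t. 0)"
      by (auto simp: triangle_integrand_def triangle_kernel_def indicator_def fun_eq_iff)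
    show ?thesis unfolding eq using False by simp
  qed
  then show "integrable lborel (\<lambda>t. triangle_integrand a b \<beta> w1 w2 (t,\<tau>))"
    "(LINT t|lborel. triangle_integrand a b \<beta> w1 w2 (t,\<tau>)) = indicator {a..b} \<tau> * (w1 \<tau> * integral {\<tau>..b} (\<lambda>t. (t-\<tau>) powr (\<beta>-1) * w2 t))"
    by auto
qed

lemma norm_triangle_integrand: "norm (triangle_integrand a b \<beta> w1 w2 p) = triangle_integrand a b \<beta> (\<lambda>x. \<bar>w1 x\<bar>) (\<lambda>x. \<bar>w2 x\<bar>) p"
  by (cases p) (auto simp: triangle_integrand_def triangle_kernel_def abs_mult indicator_def)

lemma triangle_integrand_integrable:
  fixes u v :: "real \<Rightarrow> real"
  assumes ab: "a \<le> b" and \<beta>: "0 < \<beta>" and u: "continuous_on {a..b} u" and v: "continuous_on {a..b} v"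
  shows "integrable (lborel \<Otimes>\<^sub>M lborel) (triangle_integrand a b \<beta> u v)"
proof -
  let ?F = "triangle_integrand a b \<beta> u v"
  have au: "continuous_on {a..b} (\<lambda>x. \<bar>u x\<bar>)" and av: "continuous_on {a..b} (\<lambda>x. \<bar>v x\<bar>)"
    using u v by (auto intro: continuous_intros)
  obtain Cu where Cu: "Cu \<ge> 0" "\<And>x. x \<in> {a..b} \<Longrightarrow> norm (u x) \<le> Cu"
    using continuous_on_compact_bound[OF compact_Icc u] by blast
  obtain Cv where Cv: "Cv \<ge> 0" "\<And>x. x \<in> {a..b} \<Longrightarrow> norm (v x) \<le> Cv"
    using continuous_on_compact_bound[OF compact_Icc v] by blast
  define C where "C = Cv * (Cu * ((b-a) powr \<beta> / \<beta>))"
  have mF: "?F \<in> borel_measurable (lborel \<Otimes>\<^sub>M lborel)" by (rule triangle_integrand_measurable[OF u v])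
  have mFa: "triangle_integrand a b \<beta> (\<lambda>x. \<bar>u x\<bar>) (\<lambda>x. \<bar>v x\<bar>) \<in> borel_measurable (lborel \<Otimes>\<^sub>M lborel)"
    by (rule triangle_integrand_measurable[OF au av])
  show ?thesis
  proof (rule lborel_pair.Fubini_integrable[OF mF])
    show "AE x in lborel. integrable lborel (\<lambda>y. ?F (x, y))"
      using triangle_integrand_left_section(1)[OF ab \<beta> u v] by auto
    have eqn: "(\<lambda>x. LINT y|lborel. norm (?F (x, y))) = (\<lambda>x. LINT y|lborel. triangle_integrand a b \<beta> (\<lambda>x. \<bar>u x\<bar>) (\<lambda>x. \<bar>v x\<bar>) (x,y))"
      unfolding norm_triangle_integrand ..
    have meas: "(\<lambda>x. LINT y|lborel. triangle_integrand a b \<beta> (\<lambda>x. \<bar>u x\<bar>) (\<lambda>x. \<bar>v x\<bar>) (x,y)) \<in> borel_measurable lborel"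
      using lborel.borel_measurable_lebesgue_integral[of "\<lambda>x y. triangle_integrand a b \<beta> (\<lambda>x. \<bar>u x\<bar>) (\<lambda>x. \<bar>v x\<bar>) (x,y)" lborel] mFa
      by simp
    have bnd: "norm (LINT y|lborel. triangle_integrand a b \<beta> (\<lambda>x. \<bar>u x\<bar>) (\<lambda>x. \<bar>v x\<bar>) (x,y)) \<le> norm (indicator {a..b} x *\<^sub>R C)" for x
    proof (cases "x \<in> {a..b}")
      case True
      have cu: "continuous_on {a..x} (\<lambda>x. \<bar>u x\<bar>)" using True by (auto intro: continuous_on_subset[OF au])
      have i1: "(\<lambda>\<tau>. (x-\<tau>) powr (\<beta>-1) * \<bar>u \<tau>\<bar>) integrable_on {a..x}"
        using set_borel_integral_eq_integral(1)[OF left_kernel_integrable(1)[of a x \<beta>, OF _ \<beta> cu]] True by auto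
      have i2: "(\<lambda>\<tau>. (x-\<tau>) powr (\<beta>-1) * Cu) integrable_on {a..x}"
        using left_kernel_has_integral[of a x \<beta>] True \<beta> by (auto intro: integrable_on_mult_left has_integral_integrable)
      have "integral {a..x} (\<lambda>\<tau>. (x-\<tau>) powr (\<beta>-1) * \<bar>u \<tau>\<bar>) \<le> integral {a..x} (\<lambda>\<tau>. (x-\<tau>) powr (\<beta>-1) * Cu)"
        by (rule integral_le[OF i1 i2]) (use Cu True in \<open>auto intro!: mult_left_mono\<close>)
      also have "\<dots> = Cu * ((x-a) powr \<beta> / \<beta>)"
        using integral_unique[OF left_kernel_has_integral[of a x \<beta>]] True \<beta> by (simp add: mult.commute)
      also have "\<dots> \<le> Cu * ((b-a) powr \<beta> / \<beta>)"
        using True \<beta> Cu by (intro mult_left_mono divide_right_mono powr_mono2) auto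
      finally have I: "integral {a..x} (\<lambda>\<tau>. (x-\<tau>) powr (\<beta>-1) * \<bar>u \<tau>\<bar>) \<le> Cu * ((b-a) powr \<beta> / \<beta>)" .
      have I0: "0 \<le> integral {a..x} (\<lambda>\<tau>. (x-\<tau>) powr (\<beta>-1) * \<bar>u \<tau>\<bar>)"
        by (rule integral_nonneg[OF i1]) auto
      have "\<bar>v x\<bar> * integral {a..x} (\<lambda>\<tau>. (x-\<tau>) powr (\<beta>-1) * \<bar>u \<tau>\<bar>) \<le> Cv * (Cu * ((b-a) powr \<beta> / \<beta>))"
        using Cv True I I0 by (intro mult_mono) auto
      then have "\<bar>v x\<bar> * integral {a..x} (\<lambda>\<tau>. (x-\<tau>) powr (\<beta>-1) * \<bar>u \<tau>\<bar>) \<le> C" unfolding C_def .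
      moreover have C0: "0 \<le> C" unfolding C_def using Cu Cv \<beta> by simp
      moreover have "norm (LINT y|lborel. triangle_integrand a b \<beta> (\<lambda>x. \<bar>u x\<bar>) (\<lambda>x. \<bar>v x\<bar>) (x,y))
          = \<bar>v x\<bar> * integral {a..x} (\<lambda>\<tau>. (x-\<tau>) powr (\<beta>-1) * \<bar>u \<tau>\<bar>)"
        unfolding triangle_integrand_left_section(2)[OF ab \<beta> au av] using True I0 by simp
      moreover have "norm (indicator {a..b} x *\<^sub>R C) = C" using True C0 by simp
      ultimately show ?thesis using True by simp
    next
      case False
      then show ?thesis unfolding triangle_integrand_left_section(2)[OF ab \<beta> au av] by simp
    qed
    have "integrable lborel (\<lambda>x. indicator {a..b} x *\<^sub>R C)"
      by (intro borel_integrable_compact continuous_intros) auto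
    then show "integrable lborel (\<lambda>x. LINT y|lborel. norm (?F (x, y)))"
      unfolding eqn by (rule Bochner_Integration.integrable_bound) (use meas bnd in auto)
  qed
qed

lemma triangle_fubini:
  fixes u v :: "real \<Rightarrow> real"
  assumes ab: "a \<le> b" and \<beta>: "0 < \<beta>" and u: "continuous_on {a..b} u" and v: "continuous_on {a..b} v"
  shows "integral {a..b} (\<lambda>t. v t * integral {a..t} (\<lambda>\<tau>. (t-\<tau>) powr (\<beta>-1) * u \<tau>))
       = integral {a..b} (\<lambda>\<tau>. u \<tau> * integral {\<tau>..b} (\<lambda>t. (t-\<tau>) powr (\<beta>-1) * v t))"
proof -
  let ?F = "triangle_integrand a b \<beta> u v"
  have intF: "integrable (lborel \<Otimes>\<^sub>M lborel) ?F" by (rule triangle_integrand_integrable[OF ab \<beta> u v])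
  have fub: "(LINT \<tau>|lborel. LINT t|lborel. ?F (t,\<tau>)) = (LINT t|lborel. LINT \<tau>|lborel. ?F (t,\<tau>))"
    using lborel_pair.Fubini_integral[of "\<lambda>t \<tau>. ?F (t,\<tau>)"] intF by simp
  have i1: "integrable lborel (\<lambda>t. LINT \<tau>|lborel. ?F (t,\<tau>))"
    using lborel_pair.integrable_fst'[OF intF] by simp
  have i2: "integrable lborel (\<lambda>\<tau>. LINT t|lborel. ?F (t,\<tau>))"
    using lborel_pair.integrable_snd[of "\<lambda>t \<tau>. ?F (t,\<tau>)"] intF by simp
  define \<Phi>1 where "\<Phi>1 t = v t * integral {a..t} (\<lambda>\<tau>. (t-\<tau>) powr (\<beta>-1) * u \<tau>)" for t
  define \<Phi>2 where "\<Phi>2 \<tau> = u \<tau> * integral {\<tau>..b} (\<lambda>t. (t-\<tau>) powr (\<beta>-1) * v t)" for \<tau>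
  have e1: "(\<lambda>t. LINT \<tau>|lborel. ?F (t,\<tau>)) = (\<lambda>t. indicator {a..b} t *\<^sub>R \<Phi>1 t)"
    unfolding \<Phi>1_def triangle_integrand_left_section(2)[OF ab \<beta> u v] by simp
  have e2: "(\<lambda>\<tau>. LINT t|lborel. ?F (t,\<tau>)) = (\<lambda>\<tau>. indicator {a..b} \<tau> *\<^sub>R \<Phi>2 \<tau>)"
    unfolding \<Phi>2_def triangle_integrand_right_section(2)[OF ab \<beta> u v] by simp
  have s1: "set_integrable lborel {a..b} \<Phi>1" using i1 unfolding e1 set_integrable_def .
  have s2: "set_integrable lborel {a..b} \<Phi>2" using i2 unfolding e2 set_integrable_def .
  have "integral {a..b} \<Phi>1 = (LINT t:{a..b}|lborel. \<Phi>1 t)" using set_borel_integral_eq_integral(2)[OF s1] by simp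
  also have "\<dots> = (LINT t|lborel. LINT \<tau>|lborel. ?F (t,\<tau>))" unfolding e1 set_lebesgue_integral_def ..
  also have "\<dots> = (LINT \<tau>|lborel. LINT t|lborel. ?F (t,\<tau>))" using fub by simp
  also have "\<dots> = (LINT \<tau>:{a..b}|lborel. \<Phi>2 \<tau>)" unfolding e2 set_lebesgue_integral_def ..
  also have "\<dots> = integral {a..b} \<Phi>2" using set_borel_integral_eq_integral(2)[OF s2] by simp
  finally show ?thesis unfolding \<Phi>1_def \<Phi>2_def .
qed

lemma vector_derivative_within_Icc:
  fixes f :: "real \<Rightarrow> real"
  assumes "a < b" "t \<in> {a..b}" "(f has_vector_derivative D) (at t within {a..b})"
  shows "vector_derivative f (at t within {a..b}) = D"
  using vector_derivative_within_cbox[of a b t f D] assms by simp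

lemma vector_derivative_within_cong:
  fixes f g :: "real \<Rightarrow> real"
  assumes "t \<in> S" "\<And>s. s \<in> S \<Longrightarrow> f s = g s"
  shows "vector_derivative f (at t within S) = vector_derivative g (at t within S)"
proof -
  have "(f has_vector_derivative D) (at t within S) \<longleftrightarrow> (g has_vector_derivative D) (at t within S)" for D
    using has_vector_derivative_transform[of t S g f D] has_vector_derivative_transform[of t S f g D] assms
    by auto
  then show ?thesis unfolding vector_derivative_def by simp
qed

lemma hderiv_cong:
  assumes "\<And>s. s \<in> S \<Longrightarrow> f s = g s"
  shows "t \<in> S \<Longrightarrow> hderiv k S f t = hderiv k S g t"
proof (induction k arbitrary: t)
  case 0 then show ?case using assms by simp
next
  case (Suc k)
  have "vector_derivative (hderiv k S f) (at t within S) = vector_derivative (hderiv k S g) (at t within S)"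
    by (rule vector_derivative_within_cong[OF Suc.prems Suc.IH])
  then show ?case by (simp only: hderiv.simps)
qed

lemma Cn_on_transform:
  assumes f: "Cn_on m S f" and eq: "\<And>s. s \<in> S \<Longrightarrow> f s = g s"
  shows "Cn_on m S g"
  unfolding Cn_on_def
proof (intro conjI allI impI ballI)
  have h: "hderiv k S g t = hderiv k S f t" if "t \<in> S" for k t
    using hderiv_cong[OF eq that] by simp
  fix k t assume k: "k < m" and t: "t \<in> S"
  have "(hderiv k S f has_vector_derivative hderiv (Suc k) S f t) (at t within S)"
    using f k t unfolding Cn_on_def by blast
  from has_vector_derivative_transform[OF t h this]
  show "(hderiv k S g has_vector_derivative hderiv (Suc k) S g t) (at t within S)"
    using h[OF t, of "Suc k"] by simp
next
  have "continuous_on S (hderiv m S f)" using f unfolding Cn_on_def by blast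
  then show "continuous_on S (hderiv m S g)"
    by (rule continuous_on_eq) (use hderiv_cong[OF eq] in auto)
qed

lemma Cn_on_cong:
  assumes "\<And>s. s \<in> S \<Longrightarrow> f s = g s"
  shows "Cn_on m S f \<longleftrightarrow> Cn_on m S g"
  using Cn_on_transform[of m S f g] Cn_on_transform[of m S g f] assms by auto


lemma Cn_on_continuous_hderiv:
  assumes "Cn_on m S f" "k \<le> m"
  shows "continuous_on S (hderiv k S f)"
proof (cases "k = m")
  case True then show ?thesis using assms unfolding Cn_on_def by auto
next
  case False
  then have "k < m" using assms by auto
  then have "\<forall>t\<in>S. (hderiv k S f has_vector_derivative hderiv (Suc k) S f t) (at t within S)"
    using assms unfolding Cn_on_def by auto
  then show ?thesis
    using continuous_on_eq_continuous_within has_vector_derivative_continuous by blast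
qed

lemma Cn_on_mono:
  assumes "Cn_on m S f" "k \<le> m"
  shows "Cn_on k S f"
  using assms Cn_on_continuous_hderiv[OF assms] unfolding Cn_on_def by auto

lemma hderiv_add_scaled:
  fixes f g :: "real \<Rightarrow> real"
  assumes ab: "a < b" and f: "Cn_on m {a..b} f" and g: "Cn_on m {a..b} g"
  shows "k \<le> m \<Longrightarrow> t \<in> {a..b} \<Longrightarrow> hderiv k {a..b} (\<lambda>s. f s + c * g s) t = hderiv k {a..b} f t + c * hderiv k {a..b} g t"
proof (induction k arbitrary: t)
  case 0 then show ?case by simp
next
  case (Suc k)
  have km: "k < m" and k_le: "k \<le> m" using Suc.prems(1) by auto
  have t: "t \<in> {a..b}" using Suc.prems(2) .
  have df: "(hderiv k {a..b} f has_vector_derivative hderiv (Suc k) {a..b} f t) (at t within {a..b})"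
    using f km t unfolding Cn_on_def by blast
  have dg: "(hderiv k {a..b} g has_vector_derivative hderiv (Suc k) {a..b} g t) (at t within {a..b})"
    using g km t unfolding Cn_on_def by blast
  have d1: "((\<lambda>s. hderiv k {a..b} f s + c * hderiv k {a..b} g s) has_vector_derivative
      hderiv (Suc k) {a..b} f t + c * hderiv (Suc k) {a..b} g t) (at t within {a..b})"
    by (rule has_vector_derivative_add[OF df has_vector_derivative_mult_right[OF dg]])
  have IH: "hderiv k {a..b} (\<lambda>s. f s + c * g s) s = hderiv k {a..b} f s + c * hderiv k {a..b} g s"
    if "s \<in> {a..b}" for s
    using Suc.IH[OF k_le that] .
  have d2: "(hderiv k {a..b} (\<lambda>s. f s + c * g s) has_vector_derivative
      hderiv (Suc k) {a..b} f t + c * hderiv (Suc k) {a..b} g t) (at t within {a..b})"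
    using has_vector_derivative_transform[OF t IH d1] .
  have "vector_derivative (hderiv k {a..b} (\<lambda>s. f s + c * g s)) (at t within {a..b}) =
      hderiv (Suc k) {a..b} f t + c * hderiv (Suc k) {a..b} g t"
    using vector_derivative_within_Icc[OF ab t d2] .
  then show ?case by (simp only: hderiv.simps)
qed

lemma Cn_on_add_scaled:
  fixes f g :: "real \<Rightarrow> real"
  assumes ab: "a < b" and f: "Cn_on m {a..b} f" and g: "Cn_on m {a..b} g"
  shows "Cn_on m {a..b} (\<lambda>s. f s + c * g s)"
  unfolding Cn_on_def
proof (intro conjI ballI allI impI)
  fix k t assume k: "k < m" and t: "t \<in> {a..b}"
  have df: "(hderiv k {a..b} f has_vector_derivative hderiv (Suc k) {a..b} f t) (at t within {a..b})"
    using f k t unfolding Cn_on_def by blast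
  have dg: "(hderiv k {a..b} g has_vector_derivative hderiv (Suc k) {a..b} g t) (at t within {a..b})"
    using g k t unfolding Cn_on_def by blast
  have d1: "((\<lambda>s. hderiv k {a..b} f s + c * hderiv k {a..b} g s) has_vector_derivative
      hderiv (Suc k) {a..b} f t + c * hderiv (Suc k) {a..b} g t) (at t within {a..b})"
    by (rule has_vector_derivative_add[OF df has_vector_derivative_mult_right[OF dg]])
  have IH: "hderiv k {a..b} (\<lambda>s. f s + c * g s) s = hderiv k {a..b} f s + c * hderiv k {a..b} g s"
    if "s \<in> {a..b}" for s
    using hderiv_add_scaled[OF ab f g, of k s c] k that by simp
  have d2: "(hderiv k {a..b} (\<lambda>s. f s + c * g s) has_vector_derivative
      hderiv (Suc k) {a..b} f t + c * hderiv (Suc k) {a..b} g t) (at t within {a..b})"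
    using has_vector_derivative_transform[OF t IH d1] .
  have eq: "hderiv (Suc k) {a..b} (\<lambda>s. f s + c * g s) t = hderiv (Suc k) {a..b} f t + c * hderiv (Suc k) {a..b} g t"
    using hderiv_add_scaled[OF ab f g, of "Suc k" t c] k t by simp
  show "(hderiv k {a..b} (\<lambda>s. f s + c * g s) has_vector_derivative
      hderiv (Suc k) {a..b} (\<lambda>s. f s + c * g s) t) (at t within {a..b})"
    unfolding eq by (rule d2)
next
  have cc: "continuous_on {a..b} (\<lambda>t. hderiv m {a..b} f t + c * hderiv m {a..b} g t)"
    using Cn_on_continuous_hderiv[OF f order_refl] Cn_on_continuous_hderiv[OF g order_refl] by (intro continuous_intros)
  have ee: "hderiv m {a..b} (\<lambda>s. f s + c * g s) t = hderiv m {a..b} f t + c * hderiv m {a..b} g t"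
    if "t \<in> {a..b}" for t
    using hderiv_add_scaled[OF ab f g, of m t c] that by simp
  show "continuous_on {a..b} (hderiv m {a..b} (\<lambda>s. f s + c * g s))"
    by (rule continuous_on_eq[OF cc]) (rule ee[symmetric])
qed

lemma hderiv_zero_fun:
  assumes "a < b"
  shows "t \<in> {a..b} \<Longrightarrow> hderiv k {a..b} (\<lambda>_. 0) t = 0"
proof (induction k arbitrary: t)
  case 0 then show ?case by simp
next
  case (Suc k)
  have IH: "hderiv k {a..b} (\<lambda>_. 0) s = (\<lambda>_. 0) s" if "s \<in> {a..b}" for s using Suc.IH[OF that] by simp
  have d: "(hderiv k {a..b} (\<lambda>_. 0) has_vector_derivative 0) (at t within {a..b})"
    using has_vector_derivative_transform[OF Suc.prems IH has_vector_derivative_const] .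
  have "vector_derivative (hderiv k {a..b} (\<lambda>_. 0)) (at t within {a..b}) = 0"
    using vector_derivative_within_Icc[OF assms Suc.prems d] .
  then show ?case by (simp only: hderiv.simps)
qed

lemma Cn_on_zero_fun:
  assumes "a < b"
  shows "Cn_on m {a..b} (\<lambda>_. 0)"
  unfolding Cn_on_def
proof (intro conjI ballI allI impI)
  fix k t assume "k < m" and t: "t \<in> {a..b}"
  have IH: "hderiv k {a..b} (\<lambda>_. 0) s = (\<lambda>_. 0) s" if "s \<in> {a..b}" for s using hderiv_zero_fun[OF assms that] by simp
  have "(hderiv k {a..b} (\<lambda>_. 0) has_vector_derivative 0) (at t within {a..b})"
    using has_vector_derivative_transform[OF t IH has_vector_derivative_const] .
  then show "(hderiv k {a..b} (\<lambda>_. 0) has_vector_derivative hderiv (Suc k) {a..b} (\<lambda>_. 0) t) (at t within {a..b})"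
    using hderiv_zero_fun[OF assms t, of "Suc k"] by simp
next
  show "continuous_on {a..b} (hderiv m {a..b} (\<lambda>_. 0))"
    by (rule continuous_on_eq[OF continuous_on_const]) (rule hderiv_zero_fun[OF assms, symmetric])
qed

section \<open>Truncated powers and their Caputo derivatives\<close>

definition trunc_pow :: "nat \<Rightarrow> real \<Rightarrow> real \<Rightarrow> real" where "trunc_pow N c t = (max (t - c) 0) ^ N"
definition trunc_powr :: "real \<Rightarrow> real \<Rightarrow> real \<Rightarrow> real" where "trunc_powr g c t = (max (t - c) 0) powr g"

lemma has_real_derivative_mult_linear_root:
  fixes h :: "real \<Rightarrow> real"
  assumes "isCont h c"
  shows "((\<lambda>t. (t - c) * h t) has_real_derivative h c) (at c)"
proof -
  have ev: "eventually (\<lambda>y. h y = ((y - c) * h y - (c - c) * h c) / (y - c)) (at c)"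
    unfolding eventually_at_filter by (rule always_eventually) auto
  have "(h \<longlongrightarrow> h c) (at c)" using assms isCont_def by blast
  then have "((\<lambda>y. ((y - c) * h y - (c - c) * h c) / (y - c)) \<longlongrightarrow> h c) (at c)"
    by (rule Lim_transform_eventually[OF _ ev])
  then show ?thesis by (simp add: has_field_derivative_iff)
qed

lemma continuous_on_trunc_pow: "continuous_on S (trunc_pow N c)"
  unfolding trunc_pow_def by (intro continuous_intros)

lemma trunc_pow_eq_mult: "2 \<le> N \<Longrightarrow> trunc_pow N c t = (t - c) * trunc_pow (N-1) c t"
  unfolding trunc_pow_def by (cases N) (auto simp: max_def)

lemma trunc_pow_has_real_derivative:
  assumes "2 \<le> N"
  shows "(trunc_pow N c has_real_derivative (real N * trunc_pow (N-1) c t)) (at t)"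
proof -
  consider "t > c" | "t < c" | "t = c" by linarith
  then show ?thesis
  proof cases
    case 1
    have d: "((\<lambda>s. (s - c) ^ N) has_real_derivative real N * (t - c) ^ (N - 1)) (at t)"
      by (auto intro!: derivative_eq_intros)
    have "((\<lambda>s. (s - c) ^ N) has_real_derivative real N * trunc_pow (N-1) c t) (at t)"
      using d 1 by (simp add: trunc_pow_def)
    then show ?thesis
      by (rule has_field_derivative_transform_within_open[where S="{c<..}"]) (use 1 in \<open>auto simp: trunc_pow_def\<close>)
  next
    case 2
    have "((\<lambda>s. 0) has_real_derivative real N * trunc_pow (N-1) c t) (at t)"
      using 2 assms by (simp add: trunc_pow_def power_0_left)
    then show ?thesis
      by (rule has_field_derivative_transform_within_open[where S="{..<c}"]) (use 2 assms in \<open>auto simp: trunc_pow_def\<close>)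
  next
    case 3
    have eq: "trunc_pow N c = (\<lambda>t. (t - c) * trunc_pow (N-1) c t)" using trunc_pow_eq_mult[OF assms] by auto
    have "isCont (trunc_pow (N-1) c) c" using continuous_on_trunc_pow[of UNIV] continuous_on_eq_continuous_at by blast
    from has_real_derivative_mult_linear_root[OF this]
    show ?thesis unfolding eq 3 using assms by (simp add: trunc_pow_def power_0_left)
  qed
qed

lemma scaled_trunc_pow_has_vector_derivative:
  assumes k: "k + 2 \<le> N"
  shows "((\<lambda>s. fact N / fact (N - k) * trunc_pow (N - k) c s) has_vector_derivative
      fact N / fact (N - Suc k) * trunc_pow (N - Suc k) c t) (at t within S)"
proof -
  have k2: "2 \<le> N - k" and e: "N - k - 1 = N - Suc k" using k by auto
  have d: "(trunc_pow (N - k) c has_real_derivative real (N - k) * trunc_pow (N - Suc k) c t) (at t)"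
    using trunc_pow_has_real_derivative[OF k2, of c t] unfolding e .
  have f: "fact (N - k) = real (N - k) * fact (N - Suc k)"
    using fact_reduce[of "N - k"] k by (simp del: of_nat_diff)
  have coeff: "fact N / fact (N - k) * (real (N - k) * y) = fact N / fact (N - Suc k) * y" for y :: real
    unfolding f using k by (simp add: field_simps)
  show ?thesis
    using DERIV_cmult[OF d, of "fact N / fact (N - k)"]
    unfolding coeff has_real_derivative_iff_has_vector_derivative by (rule has_vector_derivative_at_within)
qed

lemma hderiv_trunc_pow:
  assumes ab: "a < b" and N: "1 \<le> N"
  shows "k \<le> N - 1 \<Longrightarrow> t \<in> {a..b} \<Longrightarrow> hderiv k {a..b} (trunc_pow N c) t = fact N / fact (N - k) * trunc_pow (N - k) c t"
proof (induction k arbitrary: t)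
  case 0 then show ?case by simp
next
  case (Suc k)
  have "(hderiv k {a..b} (trunc_pow N c) has_vector_derivative
      fact N / fact (N - Suc k) * trunc_pow (N - Suc k) c t) (at t within {a..b})"
    by (rule has_vector_derivative_transform[OF Suc.prems(2) Suc.IH scaled_trunc_pow_has_vector_derivative])
      (use Suc.prems in auto)
  from vector_derivative_within_Icc[OF ab Suc.prems(2) this] show ?case by simp
qed

lemma Cn_on_trunc_pow:
  assumes ab: "a < b" and N: "1 \<le> N"
  shows "Cn_on (N - 1) {a..b} (trunc_pow N c)"
  unfolding Cn_on_def
proof (intro conjI ballI allI impI)
  fix k t assume k: "k < N - 1" and t: "t \<in> {a..b}"
  have "(hderiv k {a..b} (trunc_pow N c) has_vector_derivative
      fact N / fact (N - Suc k) * trunc_pow (N - Suc k) c t) (at t within {a..b})"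
    by (rule has_vector_derivative_transform[OF t hderiv_trunc_pow[OF ab N] scaled_trunc_pow_has_vector_derivative])
      (use k in auto)
  then show "(hderiv k {a..b} (trunc_pow N c) has_vector_derivative hderiv (Suc k) {a..b} (trunc_pow N c) t)
      (at t within {a..b})"
    using hderiv_trunc_pow[OF ab N, of "Suc k" t c] k t by simp
next
  show "continuous_on {a..b} (hderiv (N - 1) {a..b} (trunc_pow N c))"
    by (rule continuous_on_eq[of _ "\<lambda>s. fact N / fact (N - (N - 1)) * trunc_pow (N - (N - 1)) c s"])
      (auto intro!: continuous_intros continuous_on_trunc_pow simp: hderiv_trunc_pow[OF ab N])
qed

lemma hderiv_trunc_pow_left_end:
  assumes ab: "a < b" and ac: "a < c" and N: "1 \<le> N" and j: "j \<le> N - 1"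
  shows "hderiv j {a..b} (trunc_pow N c) a = 0"
  using hderiv_trunc_pow[OF ab N j, of a c] ab ac j N by (simp add: trunc_pow_def power_0_left)

lemma hderiv_trunc_pow_right_end:
  assumes ab: "a < b" and cb: "c < b" and N: "1 \<le> N" and j: "j \<le> N - 1"
  shows "hderiv j {a..b} (trunc_pow N c) b = (fact N / fact (N - j)) * (b - c) ^ (N - j)"
  using hderiv_trunc_pow[OF ab N j, of b c] ab cb j by (simp add: trunc_pow_def)

lemma trunc_powr_eq_mult:
  assumes "1 < g"
  shows "trunc_powr g c t = (t - c) * trunc_powr (g-1) c t"
proof (cases "t > c")
  case True
  have "(t-c) powr g = (t-c) powr (1 + (g-1))" by simp
  also have "\<dots> = (t-c) powr 1 * (t-c) powr (g-1)" by (rule powr_add)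
  also have "(t-c) powr 1 = t - c" using True by simp
  finally show ?thesis unfolding trunc_powr_def using True by simp
next
  case False
  then show ?thesis unfolding trunc_powr_def by (simp add: max_def)
qed

lemma continuous_on_trunc_powr:
  assumes "0 < g"
  shows "continuous_on S (trunc_powr g c)"
proof -
  have "continuous_on S (\<lambda>x. max (x - c) 0)" by (intro continuous_intros)
  then show ?thesis unfolding trunc_powr_def
    by (rule continuous_on_powr'[OF _ continuous_on_const]) (use assms in auto)
qed

lemma trunc_powr_has_real_derivative:
  assumes g: "1 < g"
  shows "(trunc_powr g c has_real_derivative (g * trunc_powr (g-1) c t)) (at t)"
proof -
  consider "t > c" | "t < c" | "t = c" by linarith
  then show ?thesis
  proof cases
    case 1
    have d1: "((\<lambda>z. z powr g) has_real_derivative g * (t-c) powr (g-1)) (at (t-c))"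
      by (rule has_real_derivative_powr) (use 1 in auto)
    have d2: "((\<lambda>s. s - c) has_real_derivative 1) (at t)" by (auto intro!: derivative_eq_intros)
    have "((\<lambda>s. (s - c) powr g) has_real_derivative g * trunc_powr (g-1) c t) (at t)"
      using DERIV_chain2[OF d1 d2] 1 by (simp add: trunc_powr_def)
    then show ?thesis
      by (rule has_field_derivative_transform_within_open[where S="{c<..}"]) (use 1 in \<open>auto simp: trunc_powr_def\<close>)
  next
    case 2
    have "((\<lambda>s. 0) has_real_derivative g * trunc_powr (g-1) c t) (at t)"
      using 2 by (simp add: trunc_powr_def)
    then show ?thesis
      by (rule has_field_derivative_transform_within_open[where S="{..<c}"]) (use 2 in \<open>auto simp: trunc_powr_def\<close>)
  next
    case 3
    have eq: "trunc_powr g c = (\<lambda>t. (t - c) * trunc_powr (g-1) c t)" using trunc_powr_eq_mult[OF g] by auto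
    have "isCont (trunc_powr (g-1) c) c" using continuous_on_trunc_powr[of "g-1" UNIV c] g continuous_on_eq_continuous_at by auto
    from has_real_derivative_mult_linear_root[OF this]
    show ?thesis unfolding eq 3 by (simp add: trunc_powr_def)
  qed
qed

lemma Cn_on_one_trunc_powr:
  assumes ab: "a < b" and g: "1 < g"
  shows "Cn_on 1 {a..b} (\<lambda>t. K * trunc_powr g c t)"
proof -
  have d: "((\<lambda>t. K * trunc_powr g c t) has_vector_derivative K * (g * trunc_powr (g-1) c t)) (at t within {a..b})" for t
    using has_vector_derivative_mult_right[OF trunc_powr_has_real_derivative[OF g, unfolded has_real_derivative_iff_has_vector_derivative]]
    by (rule has_vector_derivative_at_within)
  have h1: "hderiv 1 {a..b} (\<lambda>t. K * trunc_powr g c t) t = K * (g * trunc_powr (g-1) c t)" if "t \<in> {a..b}" for t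
    using vector_derivative_within_Icc[OF ab that d] by simp
  show ?thesis unfolding Cn_on_def
  proof (intro conjI ballI allI impI)
    fix k t assume "k < (1::nat)" "t \<in> {a..b}"
    then show "(hderiv k {a..b} (\<lambda>t. K * trunc_powr g c t) has_vector_derivative hderiv (Suc k) {a..b} (\<lambda>t. K * trunc_powr g c t) t) (at t within {a..b})"
      using d h1 by simp
  next
    have cc: "continuous_on {a..b} (\<lambda>t. K * (g * trunc_powr (g-1) c t))"
      using continuous_on_trunc_powr[of "g-1"] g by (intro continuous_intros) auto
    show "continuous_on {a..b} (hderiv 1 {a..b} (\<lambda>t. K * trunc_powr g c t))"
      by (rule continuous_on_eq[OF cc]) (rule h1[symmetric])
  qed
qed

lemma has_integral_kernel_power:
  fixes c t \<beta> :: real and M :: nat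
  assumes ct: "c < t" and M: "1 \<le> M" and \<beta>: "0 < \<beta>"
  shows "((\<lambda>\<tau>. (t-\<tau>) powr (\<beta>-1) * (\<tau>-c)^M) has_integral (Beta (real M + 1) \<beta> * (t-c) powr (real M + \<beta>))) {c..t}"
proof -
  define f where "f = (\<lambda>\<tau>. (t-\<tau>) powr (\<beta>-1) * (\<tau>-c)^M)"
  have B: "((\<lambda>u. u powr (real M + 1 - 1) * (1 - u) powr (\<beta> - 1)) has_integral Beta (real M + 1) \<beta>) {0..1}"
    using has_integral_Beta_real[of "real M + 1" \<beta>] \<beta> by simp
  define K0 where "K0 = (t-c) powr (\<beta>-1) * (t-c)^M"
  have B2: "((\<lambda>u. K0 * (u powr (real M + 1 - 1) * (1 - u) powr (\<beta> - 1))) has_integral K0 * Beta (real M + 1) \<beta>) {0..1}"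
    using has_integral_mult_right[OF B] .
  have eq: "K0 * (u powr (real M + 1 - 1) * (1 - u) powr (\<beta> - 1)) = f ((t-c) * u + c)" if u: "u \<in> {0..1}" for u
  proof -
    have um: "u powr (real M + 1 - 1) = u ^ M"
    proof (cases "u = 0")
      case True then show ?thesis using M by (simp add: power_0_left)
    next
      case False then have "u > 0" using u by auto
      then show ?thesis by (simp add: powr_realpow)
    qed
    have "f ((t-c) * u + c) = ((t-c) * (1-u)) powr (\<beta>-1) * ((t-c) * u)^M"
      unfolding f_def by (simp add: algebra_simps)
    also have "\<dots> = (t-c) powr (\<beta>-1) * (1-u) powr (\<beta>-1) * ((t-c)^M * u^M)"
      by (simp add: powr_mult power_mult_distrib)
    also have "\<dots> = K0 * (u ^ M * (1 - u) powr (\<beta> - 1))" unfolding K0_def by (simp add: ac_simps)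
    finally show ?thesis using um by simp
  qed
  have B3: "((\<lambda>u. f ((t-c) * u + c)) has_integral K0 * Beta (real M + 1) \<beta>) {0..1}"
    by (rule has_integral_eq[OF eq B2])
  define I where "I = (t - c) * (K0 * Beta (real M + 1) \<beta>)"
  have tc: "t - c > 0" using ct by simp
  have iff: "((\<lambda>x. f ((t-c) *\<^sub>R x + c)) has_integral (I /\<^sub>R (t-c) ^ DIM(real))) (cbox ((c - c) /\<^sub>R (t-c)) ((t - c) /\<^sub>R (t-c)))
      \<longleftrightarrow> (f has_integral I) (cbox c t)"
    by (rule has_integral_affinity_iff[OF tc])
  have "I /\<^sub>R (t-c) ^ DIM(real) = K0 * Beta (real M + 1) \<beta>" unfolding I_def using tc by simp
  moreover have "cbox ((c - c) /\<^sub>R (t-c)) ((t - c) /\<^sub>R (t-c)) = {0..1}" using tc by simp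
  ultimately have "(f has_integral I) {c..t}" using iff B3 by simp
  moreover have "I = Beta (real M + 1) \<beta> * (t-c) powr (real M + \<beta>)"
  proof -
    have "(t-c) powr (real M + \<beta>) = (t-c) powr (1 + (\<beta>-1) + real M)" by (simp add: algebra_simps)
    also have "\<dots> = (t-c) powr (1 + (\<beta>-1)) * (t-c) powr (real M)" by (rule powr_add)
    also have "(t-c) powr (1 + (\<beta>-1)) = (t-c) powr 1 * (t-c) powr (\<beta>-1)" by (rule powr_add)
    also have "(t-c) powr 1 = t - c" using tc by (simp add: powr_one)
    also have "(t-c) powr (real M) = (t-c)^M" using tc by (rule powr_realpow)
    finally show ?thesis unfolding I_def K0_def by (simp add: ac_simps)
  qed
  ultimately show ?thesis unfolding f_def by simp
qed

lemma has_integral_kernel_trunc_pow: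
  fixes a c t \<beta> :: real and M :: nat
  assumes ac: "a \<le> c" and M: "1 \<le> M" and \<beta>: "0 < \<beta>" and at: "a \<le> t"
  shows "((\<lambda>\<tau>. (t-\<tau>) powr (\<beta>-1) * trunc_pow M c \<tau>) has_integral (Beta (real M + 1) \<beta> * trunc_powr (real M + \<beta>) c t)) {a..t}"
proof (cases "t \<le> c")
  case True
  have "((\<lambda>\<tau>. 0) has_integral 0) {a..t}" by simp
  then have "((\<lambda>\<tau>. (t-\<tau>) powr (\<beta>-1) * trunc_pow M c \<tau>) has_integral 0) {a..t}"
    by (rule has_integral_eq[rotated]) (use True M in \<open>auto simp: trunc_pow_def max_def power_0_left\<close>)
  moreover have "trunc_powr (real M + \<beta>) c t = 0" unfolding trunc_powr_def using True by (simp add: max_def)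
  ultimately show ?thesis by simp
next
  case False
  have z: "((\<lambda>\<tau>. (t-\<tau>) powr (\<beta>-1) * trunc_pow M c \<tau>) has_integral 0) {a..c}"
    by (rule has_integral_eq[rotated, OF has_integral_0]) (use M in \<open>auto simp: trunc_pow_def max_def power_0_left\<close>)
  have p: "((\<lambda>\<tau>. (t-\<tau>) powr (\<beta>-1) * trunc_pow M c \<tau>) has_integral (Beta (real M + 1) \<beta> * (t-c) powr (real M + \<beta>))) {c..t}"
    by (rule has_integral_eq[rotated, OF has_integral_kernel_power]) (use False M \<beta> in \<open>auto simp: trunc_pow_def max_def\<close>)
  have "((\<lambda>\<tau>. (t-\<tau>) powr (\<beta>-1) * trunc_pow M c \<tau>) has_integral (0 + Beta (real M + 1) \<beta> * (t-c) powr (real M + \<beta>))) {a..t}"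
    by (rule has_integral_combine[OF ac _ z p]) (use False in auto)
  moreover have "trunc_powr (real M + \<beta>) c t = (t-c) powr (real M + \<beta>)" unfolding trunc_powr_def using False by simp
  ultimately show ?thesis by simp
qed

lemma floor_order_eq:
  assumes "real i - 1 < \<alpha>" "\<alpha> < real i" "1 \<le> i"
  shows "nat \<lfloor>\<alpha>\<rfloor> + 1 = i"
proof -
  have "\<lfloor>\<alpha>\<rfloor> = int i - 1" using assms by (simp add: floor_eq_iff)
  then show ?thesis using assms by simp
qed

lemma caputoL_trunc_pow:
  assumes ab: "a < b" and ac: "a < c" and m: "nat \<lfloor>\<alpha>\<rfloor> + 1 = i" and \<beta>: "0 < real i - \<alpha>"
    and i: "1 \<le> i" "i \<le> N - 1" and t: "t \<in> {a..b}"
  shows "caputoL a b \<alpha> (trunc_pow N c) t = (fact N / fact (N - i)) / Gamma (real i - \<alpha>) *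
      (Beta (real (N-i) + 1) (real i - \<alpha>) * trunc_powr (real (N-i) + (real i - \<alpha>)) c t)"
proof -
  have N: "1 \<le> N" using i by simp
  have M: "1 \<le> N - i" using i by simp
  have eq: "(t - \<tau>) powr (real i - \<alpha> - 1) * hderiv i {a..b} (trunc_pow N c) \<tau> =
      (fact N / fact (N - i)) * ((t - \<tau>) powr ((real i - \<alpha>) - 1) * trunc_pow (N - i) c \<tau>)" if "\<tau> \<in> {a..t}" for \<tau>
  proof -
    have "\<tau> \<in> {a..b}" using that t by auto
    then show ?thesis using hderiv_trunc_pow[OF ab N i(2), of \<tau> c] by (simp add: ac_simps)
  qed
  have I: "((\<lambda>\<tau>. (t - \<tau>) powr ((real i - \<alpha>) - 1) * trunc_pow (N - i) c \<tau>) has_integral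
      (Beta (real (N-i) + 1) (real i - \<alpha>) * trunc_powr (real (N-i) + (real i - \<alpha>)) c t)) {a..t}"
    using has_integral_kernel_trunc_pow[of a c "N - i" "real i - \<alpha>" t] ac M \<beta> t by auto
  have "integral {a..t} (\<lambda>\<tau>. (t - \<tau>) powr (real i - \<alpha> - 1) * hderiv i {a..b} (trunc_pow N c) \<tau>) =
      integral {a..t} (\<lambda>\<tau>. (fact N / fact (N - i)) * ((t - \<tau>) powr ((real i - \<alpha>) - 1) * trunc_pow (N - i) c \<tau>))"
    by (rule integral_cong) (rule eq)
  also have "\<dots> = (fact N / fact (N - i)) * (Beta (real (N-i) + 1) (real i - \<alpha>) * trunc_powr (real (N-i) + (real i - \<alpha>)) c t)"
    using integral_unique[OF I] by simp
  finally show ?thesis unfolding caputoL_def Let_def m by simp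
qed

lemma Cn_on_one_caputoL_trunc_pow:
  assumes ab: "a < b" and ac: "a < c" and m: "nat \<lfloor>\<alpha>\<rfloor> + 1 = i" and \<beta>: "0 < real i - \<alpha>"
    and i: "1 \<le> i" "i \<le> N - 1"
  shows "Cn_on 1 {a..b} (caputoL a b \<alpha> (trunc_pow N c))"
proof -
  define K where "K = (fact N / fact (N - i)) / Gamma (real i - \<alpha>) * Beta (real (N-i) + 1) (real i - \<alpha>)"
  define g where "g = real (N-i) + (real i - \<alpha>)"
  have g1: "1 < g" unfolding g_def using i \<beta> by simp
  have "Cn_on 1 {a..b} (\<lambda>t. K * trunc_powr g c t)" by (rule Cn_on_one_trunc_powr[OF ab g1])
  moreover have "Cn_on 1 {a..b} (caputoL a b \<alpha> (trunc_pow N c)) \<longleftrightarrow> Cn_on 1 {a..b} (\<lambda>t. K * trunc_powr g c t)"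
    by (rule Cn_on_cong) (use caputoL_trunc_pow[OF ab ac m \<beta> i] in \<open>simp add: K_def g_def\<close>)
  ultimately show ?thesis by simp
qed

lemma caputoL_add_scaled:
  fixes f g :: "real \<Rightarrow> real"
  assumes ab: "a < b" and f: "Cn_on n {a..b} f" and g: "Cn_on n {a..b} g"
    and mn: "nat \<lfloor>\<alpha>\<rfloor> + 1 \<le> n" and \<beta>: "0 < real (nat \<lfloor>\<alpha>\<rfloor> + 1) - \<alpha>" and t: "t \<in> {a..b}"
  shows "caputoL a b \<alpha> (\<lambda>s. f s + c * g s) t = caputoL a b \<alpha> f t + c * caputoL a b \<alpha> g t"
proof -
  define m where "m = nat \<lfloor>\<alpha>\<rfloor> + 1"
  have mn': "m \<le> n" unfolding m_def using mn .
  have \<beta>': "0 < real m - \<alpha>" unfolding m_def using \<beta> .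
  have at: "a \<le> t" using t by auto
  have sub: "{a..t} \<subseteq> {a..b}" using t by auto
  have cf: "continuous_on {a..t} (hderiv m {a..b} f)"
    using continuous_on_subset[OF Cn_on_continuous_hderiv[OF f mn'] sub] .
  have cg: "continuous_on {a..t} (hderiv m {a..b} g)"
    using continuous_on_subset[OF Cn_on_continuous_hderiv[OF g mn'] sub] .
  have if1: "(\<lambda>\<tau>. (t - \<tau>) powr (real m - \<alpha> - 1) * hderiv m {a..b} f \<tau>) integrable_on {a..t}"
    using set_borel_integral_eq_integral(1)[OF left_kernel_integrable(1)[OF at \<beta>' cf]] .
  have ig1: "(\<lambda>\<tau>. (t - \<tau>) powr (real m - \<alpha> - 1) * hderiv m {a..b} g \<tau>) integrable_on {a..t}"
    using set_borel_integral_eq_integral(1)[OF left_kernel_integrable(1)[OF at \<beta>' cg]] .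
  have eq: "(t - \<tau>) powr (real m - \<alpha> - 1) * hderiv m {a..b} (\<lambda>s. f s + c * g s) \<tau> =
      (t - \<tau>) powr (real m - \<alpha> - 1) * hderiv m {a..b} f \<tau> + c * ((t - \<tau>) powr (real m - \<alpha> - 1) * hderiv m {a..b} g \<tau>)"
    if "\<tau> \<in> {a..t}" for \<tau>
    using hderiv_add_scaled[OF ab f g mn', of \<tau> c] that sub by (auto simp: algebra_simps)
  have "integral {a..t} (\<lambda>\<tau>. (t - \<tau>) powr (real m - \<alpha> - 1) * hderiv m {a..b} (\<lambda>s. f s + c * g s) \<tau>) =
     integral {a..t} (\<lambda>\<tau>. (t - \<tau>) powr (real m - \<alpha> - 1) * hderiv m {a..b} f \<tau> + c * ((t - \<tau>) powr (real m - \<alpha> - 1) * hderiv m {a..b} g \<tau>))"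
    by (rule integral_cong) (rule eq)
  also have "\<dots> = integral {a..t} (\<lambda>\<tau>. (t - \<tau>) powr (real m - \<alpha> - 1) * hderiv m {a..b} f \<tau>) +
     c * integral {a..t} (\<lambda>\<tau>. (t - \<tau>) powr (real m - \<alpha> - 1) * hderiv m {a..b} g \<tau>)"
    using integral_add[OF if1 integrable_on_mult_right[OF ig1]] by simp
  finally have "integral {a..t} (\<lambda>\<tau>. (t - \<tau>) powr (real m - \<alpha> - 1) * hderiv m {a..b} (\<lambda>s. f s + c * g s) \<tau>) =
     integral {a..t} (\<lambda>\<tau>. (t - \<tau>) powr (real m - \<alpha> - 1) * hderiv m {a..b} f \<tau>) +
     c * integral {a..t} (\<lambda>\<tau>. (t - \<tau>) powr (real m - \<alpha> - 1) * hderiv m {a..b} g \<tau>)" .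
  then show ?thesis unfolding caputoL_def Let_def m_def[symmetric] by (simp add: add_divide_distrib)
qed

section \<open>Integration by parts\<close>

lemma integration_by_parts_within:
  fixes f f' g g' :: "real \<Rightarrow> real"
  assumes ab: "a \<le> b"
    and df: "\<And>t. t \<in> {a..b} \<Longrightarrow> (f has_vector_derivative f' t) (at t within {a..b})"
    and dg: "\<And>t. t \<in> {a..b} \<Longrightarrow> (g has_vector_derivative g' t) (at t within {a..b})"
    and cf': "continuous_on {a..b} f'" and cg': "continuous_on {a..b} g'"
  shows "integral {a..b} (\<lambda>t. f' t * g t) = f b * g b - f a * g a - integral {a..b} (\<lambda>t. f t * g' t)"
proof -
  have cf: "continuous_on {a..b} f"
    using df has_vector_derivative_continuous continuous_on_eq_continuous_within by blast
  have cg: "continuous_on {a..b} g"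
    using dg has_vector_derivative_continuous continuous_on_eq_continuous_within by blast
  have d: "((\<lambda>t. f t * g t) has_vector_derivative (f' t * g t + f t * g' t)) (at t within {a..b})"
    if t: "t \<in> {a..b}" for t
  proof -
    have "((\<lambda>t. f t * g t) has_real_derivative (f' t * g t + g' t * f t)) (at t within {a..b})"
      using DERIV_mult[OF df[OF t, unfolded has_real_derivative_iff_has_vector_derivative[symmetric]]
          dg[OF t, unfolded has_real_derivative_iff_has_vector_derivative[symmetric]]] by simp
    then show ?thesis by (simp add: has_real_derivative_iff_has_vector_derivative ac_simps)
  qed
  have ftc: "((\<lambda>t. f' t * g t + f t * g' t) has_integral (f b * g b - f a * g a)) {a..b}"
    using fundamental_theorem_of_calculus[OF ab d] by simp
  have i1: "(\<lambda>t. f' t * g t) integrable_on {a..b}" by (intro integrable_continuous_real continuous_intros cf' cg)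
  have i2: "(\<lambda>t. f t * g' t) integrable_on {a..b}" by (intro integrable_continuous_real continuous_intros cf cg')
  have "integral {a..b} (\<lambda>t. f' t * g t) + integral {a..b} (\<lambda>t. f t * g' t) = f b * g b - f a * g a"
    using integral_unique[OF ftc] integral_add[OF i1 i2] by simp
  then show ?thesis by simp
qed

lemma iterated_integration_by_parts:
  fixes f g :: "real \<Rightarrow> real"
  assumes ab: "a < b" and f: "Cn_on i {a..b} f" and g: "Cn_on i {a..b} g"
  shows "r \<le> i \<Longrightarrow> integral {a..b} (\<lambda>t. hderiv i {a..b} f t * g t) =
    (\<Sum>k<r. (-1)^k * (hderiv (i-1-k) {a..b} f b * hderiv k {a..b} g b - hderiv (i-1-k) {a..b} f a * hderiv k {a..b} g a))
    + (-1)^r * integral {a..b} (\<lambda>t. hderiv (i-r) {a..b} f t * hderiv r {a..b} g t)"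
proof (induction r)
  case 0 then show ?case by simp
next
  case (Suc r)
  have ri: "r < i" using Suc.prems by simp
  have e1: "Suc (i - Suc r) = i - r" using ri by simp
  have df: "(hderiv (i - Suc r) {a..b} f has_vector_derivative hderiv (i - r) {a..b} f t) (at t within {a..b})"
    if "t \<in> {a..b}" for t
  proof -
    have k: "i - Suc r < i" using ri by simp
    have "(hderiv (i - Suc r) {a..b} f has_vector_derivative hderiv (Suc (i - Suc r)) {a..b} f t) (at t within {a..b})"
      using f k that unfolding Cn_on_def by blast
    then show ?thesis unfolding e1 .
  qed
  have dg: "(hderiv r {a..b} g has_vector_derivative hderiv (Suc r) {a..b} g t) (at t within {a..b})"
    if "t \<in> {a..b}" for t
    using g ri that unfolding Cn_on_def by blast
  have cf': "continuous_on {a..b} (hderiv (i - r) {a..b} f)" by (rule Cn_on_continuous_hderiv[OF f]) simp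
  have cg': "continuous_on {a..b} (hderiv (Suc r) {a..b} g)" by (rule Cn_on_continuous_hderiv[OF g]) (use ri in simp)
  have step: "integral {a..b} (\<lambda>t. hderiv (i - r) {a..b} f t * hderiv r {a..b} g t) =
      hderiv (i - Suc r) {a..b} f b * hderiv r {a..b} g b - hderiv (i - Suc r) {a..b} f a * hderiv r {a..b} g a
      - integral {a..b} (\<lambda>t. hderiv (i - Suc r) {a..b} f t * hderiv (Suc r) {a..b} g t)"
    by (rule integration_by_parts_within[OF _ df dg cf' cg']) (use ab in auto)
  have e2: "i - 1 - r = i - Suc r" by simp
  show ?case
    unfolding Suc.IH[OF less_imp_le[OF ri]] step sum.lessThan_Suc e2
    by (simp add: algebra_simps)
qed

section \<open>Moments of truncated powers\<close>

lemma trunc_pow_has_derivative_shift: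
  assumes "2 \<le> k"
  shows "((\<lambda>x. trunc_pow k x t) has_real_derivative (- real k * trunc_pow (k-1) x t)) (at x)"
proof -
  have e: "trunc_pow j y t = trunc_pow j (-t) (-y)" for j y unfolding trunc_pow_def by simp
  have d1: "(trunc_pow k (-t) has_real_derivative (real k * trunc_pow (k-1) (-t) (-x))) (at (-x))" by (rule trunc_pow_has_real_derivative[OF assms])
  have d2: "((\<lambda>y. - y) has_real_derivative -1) (at x)" by (auto intro!: derivative_eq_intros)
  have "((\<lambda>y. trunc_pow k (-t) (-y)) has_real_derivative (real k * trunc_pow (k-1) (-t) (-x)) * -1) (at x)"
    using DERIV_chain2[OF d1 d2] .
  then show ?thesis unfolding e[symmetric] by simp
qed

lemma trunc_pow_moment_has_derivative:
  assumes ab: "a \<le> b" and h: "continuous_on {a..b} h" and k: "2 \<le> k" and c: "c \<in> {a..b}"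
  shows "((\<lambda>c. integral {a..b} (\<lambda>\<tau>. trunc_pow k c \<tau> * h \<tau>)) has_real_derivative
      (- real k * integral {a..b} (\<lambda>\<tau>. trunc_pow (k-1) c \<tau> * h \<tau>))) (at c within {a..b})"
proof -
  have fx: "((\<lambda>x. trunc_pow k x t * h t) has_vector_derivative (- real k * trunc_pow (k-1) x t * h t)) (at x within {a..b})"
    if "x \<in> {a..b}" "t \<in> cbox a b" for x t
  proof -
    have "((\<lambda>x. trunc_pow k x t * h t) has_real_derivative (- real k * trunc_pow (k-1) x t) * h t) (at x)"
      by (rule DERIV_cmult_right[OF trunc_pow_has_derivative_shift[OF k]])
    then show ?thesis
      by (simp add: has_real_derivative_iff_has_vector_derivative has_vector_derivative_at_within)
  qed
  have int: "(\<lambda>t. trunc_pow k x t * h t) integrable_on cbox a b" if "x \<in> {a..b}" for x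
    by (simp only: cbox_interval) (intro integrable_continuous_real continuous_intros continuous_on_trunc_pow h)
  have ch: "continuous_on ({a..b} \<times> {a..b}) (\<lambda>p. h (snd p))"
    by (rule continuous_on_compose2[OF h continuous_on_snd[OF continuous_on_id]]) auto
  have "continuous_on ({a..b} \<times> {a..b}) (\<lambda>p. - real k * (max (snd p - fst p) 0)^(k-1) * h (snd p))"
    by (intro continuous_intros ch)
  then have cf: "continuous_on ({a..b} \<times> cbox a b) (\<lambda>(x, t). - real k * trunc_pow (k-1) x t * h t)"
    by (simp add: trunc_pow_def case_prod_unfold cbox_interval)
  have "((\<lambda>x. integral (cbox a b) (\<lambda>t. trunc_pow k x t * h t)) has_vector_derivative
      integral (cbox a b) (\<lambda>t. - real k * trunc_pow (k-1) c t * h t)) (at c within {a..b})"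
    by (rule leibniz_rule_vector_derivative[where f="\<lambda>x t. trunc_pow k x t * h t" and fx="\<lambda>x t. - real k * trunc_pow (k-1) x t * h t",
          OF fx int cf c]) auto
  then show ?thesis
    by (simp add: cbox_interval has_real_derivative_iff_has_vector_derivative mult.assoc)
qed

lemma first_trunc_pow_moment_has_derivative:
  assumes ab: "a \<le> b" and h: "continuous_on {a..b} h" and c: "c \<in> {a..b}"
  shows "((\<lambda>c. integral {a..b} (\<lambda>\<tau>. trunc_pow 1 c \<tau> * h \<tau>)) has_real_derivative
      (- integral {c..b} h)) (at c within {a..b})"
proof -
  define R where "R x = integral {x..b} (\<lambda>\<tau>. \<tau> * h \<tau>) - x * integral {x..b} h" for x
  have rep: "integral {a..b} (\<lambda>\<tau>. trunc_pow 1 x \<tau> * h \<tau>) = R x" if x: "x \<in> {a..b}" for x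
  proof -
    have i: "(\<lambda>\<tau>. trunc_pow 1 x \<tau> * h \<tau>) integrable_on {a..b}"
      by (intro integrable_continuous_real continuous_intros continuous_on_trunc_pow h)
    have z: "integral {a..x} (\<lambda>\<tau>. trunc_pow 1 x \<tau> * h \<tau>) = 0"
    proof -
      have "integral {a..x} (\<lambda>\<tau>. trunc_pow 1 x \<tau> * h \<tau>) = integral {a..x} (\<lambda>\<tau>. 0)"
        by (rule integral_cong) (auto simp: trunc_pow_def)
      then show ?thesis by simp
    qed
    have sub: "{x..b} \<subseteq> {a..b}" using x by auto
    have hx: "continuous_on {x..b} h" using continuous_on_subset[OF h sub] .
    have i1: "(\<lambda>\<tau>. \<tau> * h \<tau>) integrable_on {x..b}" by (intro integrable_continuous_real continuous_intros hx)
    have i2: "h integrable_on {x..b}" by (intro integrable_continuous_real hx)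
    have "integral {x..b} (\<lambda>\<tau>. trunc_pow 1 x \<tau> * h \<tau>) = integral {x..b} (\<lambda>\<tau>. \<tau> * h \<tau> - x * h \<tau>)"
      by (rule integral_cong) (auto simp: trunc_pow_def algebra_simps)
    also have "\<dots> = R x" unfolding R_def using integral_diff[OF i1 integrable_on_mult_right[OF i2, of x]] by simp
    finally have p: "integral {x..b} (\<lambda>\<tau>. trunc_pow 1 x \<tau> * h \<tau>) = R x" .
    have "integral {a..x} (\<lambda>\<tau>. trunc_pow 1 x \<tau> * h \<tau>) + integral {x..b} (\<lambda>\<tau>. trunc_pow 1 x \<tau> * h \<tau>) = integral {a..b} (\<lambda>\<tau>. trunc_pow 1 x \<tau> * h \<tau>)"
      using Henstock_Kurzweil_Integration.integral_combine[where a=a and c=x and b=b and f="\<lambda>\<tau>. trunc_pow 1 x \<tau> * h \<tau>"] x i by auto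
    then show ?thesis using z p by simp
  qed
  have d1: "((\<lambda>x. integral {x..b} (\<lambda>\<tau>. \<tau> * h \<tau>)) has_real_derivative - (c * h c)) (at c within {a..b})"
    by (rule integral_has_real_derivative'[OF _ c]) (intro continuous_intros h)
  have d2: "((\<lambda>x. integral {x..b} h) has_real_derivative - h c) (at c within {a..b})"
    by (rule integral_has_real_derivative'[OF h c])
  have dR: "(R has_real_derivative - integral {c..b} h) (at c within {a..b})"
  proof -
    have "(R has_real_derivative (- (c * h c) - (1 * integral {c..b} h + (- h c) * c))) (at c within {a..b})"
      unfolding R_def by (rule DERIV_diff[OF d1 DERIV_mult[OF DERIV_ident d2]])
    then show ?thesis by (simp add: algebra_simps)
  qed
  have eq: "integral {a..b} (\<lambda>\<tau>. trunc_pow 1 x \<tau> * h \<tau>) = R x" if "x \<in> {a..b}" for x using rep[OF that] .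
  show ?thesis
    using has_vector_derivative_transform[OF c eq dR[unfolded has_real_derivative_iff_has_vector_derivative]]
    by (simp add: has_real_derivative_iff_has_vector_derivative)
qed

lemma trunc_pow_moment_polynomial_step:
  assumes ab: "a < b" and h: "continuous_on {a..b} h" and k: "2 \<le> k"
    and q: "\<forall>c\<in>{a<..<b}. integral {a..b} (\<lambda>\<tau>. trunc_pow k c \<tau> * h \<tau>) = poly q c"
  shows "\<forall>c\<in>{a<..<b}. integral {a..b} (\<lambda>\<tau>. trunc_pow (k - 1) c \<tau> * h \<tau>)
    = poly (smult (- 1 / real k) (pderiv q)) c"
proof
  fix c assume c: "c \<in> {a<..<b}"
  define G where "G k c = integral {a..b} (\<lambda>\<tau>. trunc_pow k c \<tau> * h \<tau>)" for k c
  have "(G k has_real_derivative (- real k * G (k - 1) c)) (at c within {a..b})"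
    unfolding G_def using trunc_pow_moment_has_derivative[OF less_imp_le[OF ab] h k] c by simp
  then have d1: "(G k has_real_derivative (- real k * G (k - 1) c)) (at c)"
    using at_within_interior[of c "{a..b}"] c by simp
  have d2: "(G k has_real_derivative poly (pderiv q) c) (at c)"
    by (rule has_field_derivative_transform_within_open[OF poly_DERIV[of q c], where S="{a<..<b}"])
      (use c q in \<open>auto simp: G_def\<close>)
  have "- real k * G (k - 1) c = poly (pderiv q) c" using DERIV_unique[OF d1 d2] .
  then have "G (k - 1) c = poly (smult (- 1 / real k) (pderiv q)) c"
    using k by (simp add: field_simps)
  then show "integral {a..b} (\<lambda>\<tau>. trunc_pow (k - 1) c \<tau> * h \<tau>) = poly (smult (- 1 / real k) (pderiv q)) c"
    unfolding G_def .
qed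

lemma tail_integral_constant_imp_zero:
  fixes h :: "real \<Rightarrow> real"
  assumes ab: "a < b" and h: "continuous_on {a..b} h"
    and const: "\<And>c. c \<in> {a<..<b} \<Longrightarrow> integral {c..b} h = K"
  shows "\<forall>c\<in>{a..b}. h c = 0"
proof -
  have h0: "h c = 0" if c: "c \<in> {a<..<b}" for c
  proof -
    have "((\<lambda>x. integral {x..b} h) has_real_derivative - h c) (at c within {a..b})"
      using integral_has_real_derivative'[OF h] c by simp
    then have d1: "((\<lambda>x. integral {x..b} h) has_real_derivative - h c) (at c)"
      using at_within_interior[of c "{a..b}"] c by simp
    have d2: "((\<lambda>x. integral {x..b} h) has_real_derivative 0) (at c)"
      by (rule has_field_derivative_transform_within_open[OF DERIV_const[of K "at c"], where S="{a<..<b}"])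
        (use c const in auto)
    show ?thesis using DERIV_unique[OF d1 d2] by simp
  qed
  have "closure {a<..<b} = {a..b}" using ab by simp
  then show ?thesis
    using continuous_constant_on_closure[of "{a<..<b}" h 0] h h0 by auto
qed

lemma trunc_pow_moments_polynomial_imp_zero:
  assumes ab: "a < b" and h: "continuous_on {a..b} h" and N: "1 \<le> N"
    and P: "\<forall>c\<in>{a<..<b}. integral {a..b} (\<lambda>\<tau>. trunc_pow N c \<tau> * h \<tau>) = poly p c" and dp: "degree p \<le> N"
  shows "\<forall>c\<in>{a..b}. h c = 0"
proof -
  have "\<exists>q. degree q \<le> N - d \<and> (\<forall>c\<in>{a<..<b}. integral {a..b} (\<lambda>\<tau>. trunc_pow (N - d) c \<tau> * h \<tau>) = poly q c)"
    if "d \<le> N - 1" for d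
    using that
  proof (induction d)
    case 0 then show ?case using P dp by auto
  next
    case (Suc d)
    then obtain q where q: "degree q \<le> N - d"
      "\<forall>c\<in>{a<..<b}. integral {a..b} (\<lambda>\<tau>. trunc_pow (N - d) c \<tau> * h \<tau>) = poly q c" by auto
    have "2 \<le> N - d" and e: "N - d - 1 = N - Suc d" using Suc.prems by auto
    from trunc_pow_moment_polynomial_step[OF ab h this(1) q(2)]
    have "\<forall>c\<in>{a<..<b}. integral {a..b} (\<lambda>\<tau>. trunc_pow (N - Suc d) c \<tau> * h \<tau>)
      = poly (smult (- 1 / real (N - d)) (pderiv q)) c"
      unfolding e .
    moreover have "degree (smult (- 1 / real (N - d)) (pderiv q)) \<le> N - Suc d"
      using degree_smult_le[of "- 1 / real (N - d)" "pderiv q"] q(1) degree_pderiv[of q] by linarith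
    ultimately show ?case by (intro exI[of _ "smult (- 1 / real (N - d)) (pderiv q)"] conjI)
  qed
  from this[of "N - 1"] N obtain q1 where q1: "degree q1 \<le> 1"
    "\<forall>c\<in>{a<..<b}. integral {a..b} (\<lambda>\<tau>. trunc_pow 1 c \<tau> * h \<tau>) = poly q1 c" by auto
  have "degree (pderiv q1) = 0" using q1(1) degree_pderiv[of q1] by simp
  then have const: "poly (pderiv q1) c = coeff (pderiv q1) 0" for c
    using degree_0_id by (metis poly_pCons mult_zero_right add.right_neutral poly_0 pCons_0_0)
  have "integral {c..b} h = - coeff (pderiv q1) 0" if c: "c \<in> {a<..<b}" for c
  proof -
    have d1: "((\<lambda>c. integral {a..b} (\<lambda>\<tau>. trunc_pow 1 c \<tau> * h \<tau>)) has_real_derivative (- integral {c..b} h)) (at c)"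
      using first_trunc_pow_moment_has_derivative[OF less_imp_le[OF ab] h, of c] at_within_interior[of c "{a..b}"] c
      by simp
    have d2: "((\<lambda>c. integral {a..b} (\<lambda>\<tau>. trunc_pow 1 c \<tau> * h \<tau>)) has_real_derivative poly (pderiv q1) c) (at c)"
      by (rule has_field_derivative_transform_within_open[OF poly_DERIV[of q1 c], where S="{a<..<b}"])
        (use c q1(2) in auto)
    show ?thesis using DERIV_unique[OF d1 d2] const[of c] by simp
  qed
  then show ?thesis by (rule tail_integral_constant_imp_zero[OF ab h])
qed

lemma sum_monomials_vanishing_imp_zero:
  fixes e :: "nat \<Rightarrow> real"
  assumes d: "0 < d" and z: "\<forall>s\<in>{0<..<d}. (\<Sum>k<i. e k * s^k) = 0"
  shows "\<forall>k<i. e k = 0"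
proof -
  define q where "q = (\<Sum>k<i. monom (e k) k)"
  have pq: "poly q s = (\<Sum>k<i. e k * s^k)" for s unfolding q_def by (simp add: poly_sum poly_monom)
  have "{0<..<d} \<subseteq> {x. poly q x = 0}" using z pq by auto
  moreover have "infinite {0<..<d}" using d by simp
  ultimately have "infinite {x. poly q x = 0}" using finite_subset by blast
  then have q0: "q = 0" using poly_roots_finite by blast
  show ?thesis
  proof (intro allI impI)
    fix k assume k: "k < i"
    have "coeff q k = e k" unfolding q_def coeff_sum using k by simp
    then show "e k = 0" using q0 by simp
  qed
qed

lemma caputoL_zero_fun:
  assumes ab: "a < b" and t: "t \<in> {a..b}"
  shows "caputoL a b \<alpha> (\<lambda>_. 0) t = 0"
proof -
  have "integral {a..t} (\<lambda>\<tau>. (t - \<tau>) powr (real (nat \<lfloor>\<alpha>\<rfloor> + 1) - \<alpha> - 1) * hderiv (nat \<lfloor>\<alpha>\<rfloor> + 1) {a..b} (\<lambda>_. 0) \<tau>)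
      = integral {a..t} (\<lambda>\<tau>. 0)"
  proof (rule integral_cong)
    fix \<tau> assume "\<tau> \<in> {a..t}"
    then have "\<tau> \<in> {a..b}" using t by auto
    then have "hderiv (nat \<lfloor>\<alpha>\<rfloor> + 1) {a..b} (\<lambda>_. 0) \<tau> = 0" by (rule hderiv_zero_fun[OF ab])
    then show "(t - \<tau>) powr (real (nat \<lfloor>\<alpha>\<rfloor> + 1) - \<alpha> - 1) * hderiv (nat \<lfloor>\<alpha>\<rfloor> + 1) {a..b} (\<lambda>_. 0) \<tau> = 0"
      by (simp only: mult_zero_right)
  qed
  then show ?thesis unfolding caputoL_def Let_def by simp
qed

lemma fractional_order_facts:
  assumes al: "\<forall>i\<in>{1..n}. real i - 1 < al i \<and> al i < real i" and k: "k \<in> {1..n}"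
  shows "nat \<lfloor>al k\<rfloor> + 1 = k" "0 < real k - al k" "nat \<lfloor>al k\<rfloor> + 1 \<le> n"
    "0 < real (nat \<lfloor>al k\<rfloor> + 1) - al k"
proof -
  show m: "nat \<lfloor>al k\<rfloor> + 1 = k" using floor_order_eq[of k "al k"] al k by auto
  show "0 < real k - al k" using al k by auto
  then show "0 < real (nat \<lfloor>al k\<rfloor> + 1) - al k" using m by simp
  show "nat \<lfloor>al k\<rfloor> + 1 \<le> n" using m k by simp
qed

lemma admissible_trunc_pow_variation:
  assumes ab: "a < b" and al: "\<forall>i\<in>{1..n}. real i - 1 < al i \<and> al i < real i"
    and i: "i \<in> {1..n}" and c: "c \<in> {a<..<b}"
  shows "admissible n a b al (\<lambda>i j. 0) (\<lambda>k. if k = i then trunc_pow (n+1) c else (\<lambda>_. 0))"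
  unfolding admissible_def
proof (intro ballI conjI allI impI)
  fix k assume k: "k \<in> {1..n}"
  have n1: "1 \<le> n" using i by auto
  have ac: "a < c" using c by auto
  show "Cn_on n {a..b} (if k = i then trunc_pow (n+1) c else (\<lambda>_. 0))"
    using Cn_on_trunc_pow[OF ab, of "n + 1" c] Cn_on_zero_fun[OF ab] by simp
  show "Cn_on 1 {a..b} (caputoL a b (al k) (if k = i then trunc_pow (n+1) c else (\<lambda>_. 0)))"
  proof (cases "k = i")
    case True
    have "Cn_on 1 {a..b} (caputoL a b (al i) (trunc_pow (n+1) c))"
      by (rule Cn_on_one_caputoL_trunc_pow[OF ab ac fractional_order_facts(1)[OF al i] fractional_order_facts(2)[OF al i]]) (use i in auto)
    then show ?thesis using True by simp
  next
    case False
    have "Cn_on 1 {a..b} (caputoL a b (al k) (\<lambda>_. 0)) \<longleftrightarrow> Cn_on 1 {a..b} (\<lambda>_. 0)"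
      by (rule Cn_on_cong) (rule caputoL_zero_fun[OF ab])
    then show ?thesis using False Cn_on_zero_fun[OF ab] by simp
  qed
  fix j assume j: "j < k"
  show "hderiv j {a..b} (if k = i then trunc_pow (n+1) c else (\<lambda>_. 0)) a = 0"
  proof (cases "k = i")
    case True
    have "hderiv j {a..b} (trunc_pow (n+1) c) a = 0"
      by (rule hderiv_trunc_pow_left_end[OF ab ac]) (use j k True in auto)
    then show ?thesis using True by simp
  next
    case False
    then show ?thesis using hderiv_zero_fun[OF ab, of a j] ab by simp
  qed
qed

lemma admissible_add_scaled:
  assumes ab: "a < b" and al: "\<forall>i\<in>{1..n}. real i - 1 < al i \<and> al i < real i"
    and x: "admissible n a b al xa x" and \<eta>: "admissible n a b al (\<lambda>i j. 0) \<eta>"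
  shows "admissible n a b al xa (\<lambda>k s. x k s + e * \<eta> k s)"
    "\<And>k t. k \<in> {1..n} \<Longrightarrow> t \<in> {a..b} \<Longrightarrow>
       caputoL a b (al k) (\<lambda>s. x k s + e * \<eta> k s) t = caputoL a b (al k) (x k) t + e * caputoL a b (al k) (\<eta> k) t"
proof -
  show cap: "caputoL a b (al k) (\<lambda>s. x k s + e * \<eta> k s) t = caputoL a b (al k) (x k) t + e * caputoL a b (al k) (\<eta> k) t"
    if k: "k \<in> {1..n}" and t: "t \<in> {a..b}" for k t
  proof -
    have xk: "Cn_on n {a..b} (x k)" and \<eta>k: "Cn_on n {a..b} (\<eta> k)"
      using x \<eta> k unfolding admissible_def by auto
    show ?thesis by (rule caputoL_add_scaled[OF ab xk \<eta>k fractional_order_facts(3)[OF al k] fractional_order_facts(4)[OF al k] t])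
  qed
  show "admissible n a b al xa (\<lambda>k s. x k s + e * \<eta> k s)"
    unfolding admissible_def
  proof (intro ballI conjI allI impI)
    fix k assume k: "k \<in> {1..n}"
    have xk: "Cn_on n {a..b} (x k)" and \<eta>k: "Cn_on n {a..b} (\<eta> k)"
      using x \<eta> k unfolding admissible_def by auto
    have xc: "Cn_on 1 {a..b} (caputoL a b (al k) (x k))" and \<eta>c: "Cn_on 1 {a..b} (caputoL a b (al k) (\<eta> k))"
      using x \<eta> k unfolding admissible_def by auto
    show "Cn_on n {a..b} (\<lambda>s. x k s + e * \<eta> k s)" by (rule Cn_on_add_scaled[OF ab xk \<eta>k])
    have "Cn_on 1 {a..b} (caputoL a b (al k) (\<lambda>s. x k s + e * \<eta> k s)) \<longleftrightarrow>
        Cn_on 1 {a..b} (\<lambda>t. caputoL a b (al k) (x k) t + e * caputoL a b (al k) (\<eta> k) t)"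
      by (rule Cn_on_cong) (rule cap[OF k])
    then show "Cn_on 1 {a..b} (caputoL a b (al k) (\<lambda>s. x k s + e * \<eta> k s))"
      using Cn_on_add_scaled[OF ab xc \<eta>c] by simp
    fix j assume j: "j < k"
    have jn: "j \<le> n" using j k by auto
    have "hderiv j {a..b} (\<lambda>s. x k s + e * \<eta> k s) a = hderiv j {a..b} (x k) a + e * hderiv j {a..b} (\<eta> k) a"
      by (rule hderiv_add_scaled[OF ab xk \<eta>k jn]) (use ab in auto)
    then show "hderiv j {a..b} (\<lambda>s. x k s + e * \<eta> k s) a = xa k j"
      using x \<eta> k j unfolding admissible_def by auto
  qed
qed

lemma continuous_on_vecn:
  assumes "\<And>j. 1 \<le> j \<Longrightarrow> j \<le> n \<Longrightarrow> continuous_on S (F j)"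
  shows "continuous_on S (\<lambda>t. vecn n (\<lambda>j. F j t))"
proof (rule continuous_on_coordinatewise_then_product)
  fix j
  show "continuous_on S (\<lambda>t. vecn n (\<lambda>j. F j t) j)"
  proof (cases "1 \<le> j \<and> j \<le> n")
    case True then show ?thesis using assms[of j] by (simp add: vecn_def)
  next
    case False
    then have e: "(\<lambda>t. vecn n (\<lambda>j. F j t) j) = (\<lambda>t. 0)" by (auto simp: vecn_def)
    show ?thesis unfolding e by (rule continuous_on_const)
  qed
qed

lemma continuous_on_fun_upd:
  fixes A :: "'a::topological_space \<Rightarrow> nat \<Rightarrow> real"
  assumes A: "continuous_on S A" and p: "continuous_on S p"
  shows "continuous_on S (\<lambda>w. (A w)(i := p w))"
proof (rule continuous_on_coordinatewise_then_product)
  fix j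
  show "continuous_on S (\<lambda>w. ((A w)(i := p w)) j)"
  proof (cases "j = i")
    case True then show ?thesis using p by simp
  next
    case False then show ?thesis using continuous_on_product_then_coordinatewise[OF A, of j] by simp
  qed
qed

section \<open>Testing with truncated powers\<close>

lemma trunc_pow_moments_vanish:
  fixes h :: "real \<Rightarrow> real" and e :: "nat \<Rightarrow> real"
  assumes ab: "a < b" and h: "continuous_on {a..b} h" and N: "1 \<le> N" "i \<le> N"
    and moments: "\<And>c. c \<in> {a<..<b} \<Longrightarrow>
      integral {a..b} (\<lambda>\<tau>. trunc_pow N c \<tau> * h \<tau>) = (\<Sum>k<i. e k * (b - c) ^ (N + 1 - i + k))"
  shows "\<forall>t\<in>{a..b}. h t = 0" and "\<forall>k<i. e k = 0"
proof -
  define p where "p = (\<Sum>k<i. smult (e k) ([:b, -1:] ^ (N + 1 - i + k)))"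
  have "poly p c = (\<Sum>k<i. e k * (b - c) ^ (N + 1 - i + k))" for c
    unfolding p_def poly_sum by simp
  moreover have "degree p \<le> N"
    unfolding p_def
  proof (rule degree_sum_le)
    fix k assume "k \<in> {..<i}"
    then have "degree ([:b, -1::real:] ^ (N + 1 - i + k)) \<le> N"
      using N by (intro order_trans[OF degree_power_le]) auto
    then show "degree (smult (e k) ([:b, -1:] ^ (N + 1 - i + k))) \<le> N"
      using degree_smult_le order_trans by blast
  qed simp
  ultimately show h0: "\<forall>t\<in>{a..b}. h t = 0"
    using moments by (intro trunc_pow_moments_polynomial_imp_zero[OF ab h N(1)]) auto
  have "(\<Sum>k<i. e k * s ^ k) = 0" if s: "s \<in> {0<..<b - a}" for s
  proof -
    have "(\<Sum>k<i. e k * s ^ (N + 1 - i + k)) = integral {a..b} (\<lambda>\<tau>. trunc_pow N (b - s) \<tau> * h \<tau>)"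
      using moments[of "b - s"] s by simp
    also have "\<dots> = integral {a..b} (\<lambda>_. 0)" by (rule integral_cong) (use h0 in auto)
    finally have "s ^ (N + 1 - i) * (\<Sum>k<i. e k * s ^ k) = 0"
      by (simp add: sum_distrib_left power_add algebra_simps)
    then show ?thesis using s by simp
  qed
  then show "\<forall>k<i. e k = 0"
    by (intro sum_monomials_vanishing_imp_zero[of "b - a"]) (use ab in auto)
qed

lemma caputoL_integration_by_parts:
  fixes f g :: "real \<Rightarrow> real"
  assumes ab: "a \<le> b" and f: "Cn_on (nat \<lfloor>\<alpha>\<rfloor> + 1) {a..b} f" and g: "continuous_on {a..b} g"
  shows "integral {a..b} (\<lambda>t. g t * caputoL a b \<alpha> f t)
    = integral {a..b} (\<lambda>\<tau>. hderiv (nat \<lfloor>\<alpha>\<rfloor> + 1) {a..b} f \<tau> * rRL_int b (real (nat \<lfloor>\<alpha>\<rfloor> + 1) - \<alpha>) g \<tau>)"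
proof -
  define m where "m = nat \<lfloor>\<alpha>\<rfloor> + 1"
  have \<beta>: "0 < real m - \<alpha>" unfolding m_def by linarith
  have "integral {a..b} (\<lambda>t. g t * caputoL a b \<alpha> f t)
      = integral {a..b} (\<lambda>t. g t * integral {a..t} (\<lambda>\<tau>. (t - \<tau>) powr (real m - \<alpha> - 1) * hderiv m {a..b} f \<tau>))
        / Gamma (real m - \<alpha>)"
    unfolding caputoL_def Let_def m_def[symmetric] by (simp add: times_divide_eq_right)
  also have "\<dots> = integral {a..b} (\<lambda>\<tau>. hderiv m {a..b} f \<tau> * integral {\<tau>..b} (\<lambda>t. (t - \<tau>) powr (real m - \<alpha> - 1) * g t))
        / Gamma (real m - \<alpha>)"
    using triangle_fubini[OF ab \<beta> Cn_on_continuous_hderiv[OF f[folded m_def] order_refl] g] by simp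
  also have "\<dots> = integral {a..b} (\<lambda>\<tau>. hderiv m {a..b} f \<tau> * rRL_int b (real m - \<alpha>) g \<tau>)"
    unfolding rRL_int_def by (simp add: times_divide_eq_right)
  finally show ?thesis unfolding m_def .
qed

lemma trunc_pow_integration_by_parts:
  fixes g :: "real \<Rightarrow> real"
  assumes ab: "a < b" and c: "c \<in> {a<..<b}" and i: "1 \<le> i" "i < N" and g: "Cn_on i {a..b} g"
  shows "integral {a..b} (\<lambda>t. hderiv i {a..b} (trunc_pow N c) t * g t)
    = (\<Sum>k<i. (-1) ^ k * (fact N / fact (N + 1 - i + k)) * (b - c) ^ (N + 1 - i + k) * hderiv k {a..b} g b)
      + (-1) ^ i * integral {a..b} (\<lambda>t. trunc_pow N c t * hderiv i {a..b} g t)"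
proof -
  have "Cn_on (N - 1) {a..b} (trunc_pow N c)"
    using Cn_on_trunc_pow[OF ab, of N c] i by simp
  then have pp: "Cn_on i {a..b} (trunc_pow N c)" by (rule Cn_on_mono) (use i in simp)
  have "(-1) ^ k * (hderiv (i - 1 - k) {a..b} (trunc_pow N c) b * hderiv k {a..b} g b
        - hderiv (i - 1 - k) {a..b} (trunc_pow N c) a * hderiv k {a..b} g a)
      = (-1) ^ k * (fact N / fact (N + 1 - i + k)) * (b - c) ^ (N + 1 - i + k) * hderiv k {a..b} g b"
    if "k < i" for k
  proof -
    have "N - (i - 1 - k) = N + 1 - i + k" using that i by simp
    then show ?thesis
      using hderiv_trunc_pow_left_end[OF ab, of c N "i - 1 - k"] hderiv_trunc_pow_right_end[OF ab, of c N "i - 1 - k"]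
        that i c by simp
  qed
  then show ?thesis
    using iterated_integration_by_parts[OF ab pp g order_refl] by simp
qed

lemma xvec_component_variation:
  assumes "i \<in> {1..n}" and "\<And>k. k \<noteq> i \<Longrightarrow> \<eta> k = (\<lambda>_. 0)"
  shows "xvec n (\<lambda>k s. x k s + \<epsilon> * \<eta> k s) t = (xvec n x t)(i := x i t + \<epsilon> * \<eta> i t)"
  using assms unfolding xvec_def vecn_def by (auto simp: fun_eq_iff)

lemma C1_lagr_partials:
  assumes L: "C1_lagr n a b L" and w: "(t, X, V, z) \<in> Ldom n a b" and i: "i \<in> {1..n}"
  shows "((\<lambda>s. L t (X(i := s)) V z) has_real_derivative pLx L i t X V z) (at (X i))"
    and "((\<lambda>s. L t X (V(i := s)) z) has_real_derivative pLv L i t X V z) (at (V i))"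
    and "((\<lambda>s. L t X V s) has_real_derivative pLz L t X V z) (at z)"
proof -
  obtain Lt Lx Lv Lz where C: "\<forall>(t, X, V, z) \<in> Ldom n a b.
          ((\<lambda>s. L s X V z) has_real_derivative Lt (t, X, V, z)) (at t within {a..b})
        \<and> (\<forall>i\<in>{1..n}. ((\<lambda>s. L t (X(i := s)) V z) has_real_derivative Lx i (t, X, V, z)) (at (X i)))
        \<and> (\<forall>i\<in>{1..n}. ((\<lambda>s. L t X (V(i := s)) z) has_real_derivative Lv i (t, X, V, z)) (at (V i)))
        \<and> ((\<lambda>s. L t X V s) has_real_derivative Lz (t, X, V, z)) (at z)"
    using L unfolding C1_lagr_def by (elim exE conjE)
  have dx: "((\<lambda>s. L t (X(i := s)) V z) has_real_derivative Lx i (t, X, V, z)) (at (X i))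
      \<and> ((\<lambda>s. L t X (V(i := s)) z) has_real_derivative Lv i (t, X, V, z)) (at (V i))
      \<and> ((\<lambda>s. L t X V s) has_real_derivative Lz (t, X, V, z)) (at z)"
    using bspec[OF C w] i by (simp only: prod.case)
  show "((\<lambda>s. L t (X(i := s)) V z) has_real_derivative pLx L i t X V z) (at (X i))"
    unfolding pLx_def DERIV_imp_deriv[OF conjunct1[OF dx]] by (rule conjunct1[OF dx])
  show "((\<lambda>s. L t X (V(i := s)) z) has_real_derivative pLv L i t X V z) (at (V i))"
    unfolding pLv_def DERIV_imp_deriv[OF conjunct1[OF conjunct2[OF dx]]] by (rule conjunct1[OF conjunct2[OF dx]])
  show "((\<lambda>s. L t X V s) has_real_derivative pLz L t X V z) (at z)"
    unfolding pLz_def DERIV_imp_deriv[OF conjunct2[OF conjunct2[OF dx]]] by (rule conjunct2[OF conjunct2[OF dx]])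
qed

lemma C1_lagr_continuous_partials:
  assumes L: "C1_lagr n a b L" and i: "i \<in> {1..n}"
  shows "continuous_on (Ldom n a b) (\<lambda>(t, X, V, z). pLx L i t X V z)"
    and "continuous_on (Ldom n a b) (\<lambda>(t, X, V, z). pLv L i t X V z)"
    and "continuous_on (Ldom n a b) (\<lambda>(t, X, V, z). pLz L t X V z)"
proof -
  obtain Lt Lx Lv Lz where C: "\<forall>(t, X, V, z) \<in> Ldom n a b.
          ((\<lambda>s. L s X V z) has_real_derivative Lt (t, X, V, z)) (at t within {a..b})
        \<and> (\<forall>i\<in>{1..n}. ((\<lambda>s. L t (X(i := s)) V z) has_real_derivative Lx i (t, X, V, z)) (at (X i)))
        \<and> (\<forall>i\<in>{1..n}. ((\<lambda>s. L t X (V(i := s)) z) has_real_derivative Lv i (t, X, V, z)) (at (V i)))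
        \<and> ((\<lambda>s. L t X V s) has_real_derivative Lz (t, X, V, z)) (at z)"
    and cont: "\<forall>i\<in>{1..n}. continuous_on (Ldom n a b) (Lx i) \<and> continuous_on (Ldom n a b) (Lv i)"
      "continuous_on (Ldom n a b) Lz"
    using L unfolding C1_lagr_def by (elim exE conjE)
  have eq: "Lx i w = (\<lambda>(t, X, V, z). pLx L i t X V z) w \<and> Lv i w = (\<lambda>(t, X, V, z). pLv L i t X V z) w
      \<and> Lz w = (\<lambda>(t, X, V, z). pLz L t X V z) w" if w: "w \<in> Ldom n a b" for w
  proof (cases w rule: prod_cases4)
    case (fields t X V z)
    have d: "((\<lambda>s. L t (X(i := s)) V z) has_real_derivative Lx i (t, X, V, z)) (at (X i))
      \<and> ((\<lambda>s. L t X (V(i := s)) z) has_real_derivative Lv i (t, X, V, z)) (at (V i))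
      \<and> ((\<lambda>s. L t X V s) has_real_derivative Lz (t, X, V, z)) (at z)"
      using bspec[OF C w] i unfolding fields by (simp only: prod.case)
    show ?thesis
      unfolding fields prod.case pLx_def pLv_def pLz_def
      using DERIV_imp_deriv[OF conjunct1[OF d]] DERIV_imp_deriv[OF conjunct1[OF conjunct2[OF d]]]
        DERIV_imp_deriv[OF conjunct2[OF conjunct2[OF d]]] by simp
  qed
  have cx: "continuous_on (Ldom n a b) (Lx i)" and cv: "continuous_on (Ldom n a b) (Lv i)"
    using cont(1) i by blast+
  show "continuous_on (Ldom n a b) (\<lambda>(t, X, V, z). pLx L i t X V z)"
    by (rule continuous_on_eq[OF cx]) (use eq in blast)
  show "continuous_on (Ldom n a b) (\<lambda>(t, X, V, z). pLv L i t X V z)"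
    by (rule continuous_on_eq[OF cv]) (use eq in blast)
  show "continuous_on (Ldom n a b) (\<lambda>(t, X, V, z). pLz L t X V z)"
    by (rule continuous_on_eq[OF cont(2)]) (use eq in blast)
qed

locale fractional_lagrange_problem =
  fixes a b za :: real and n :: nat and al :: "nat \<Rightarrow> real" and xa :: "nat \<Rightarrow> nat \<Rightarrow> real"
    and L :: lagr and Z :: "(nat \<Rightarrow> real \<Rightarrow> real) \<Rightarrow> real \<Rightarrow> real" and x :: "nat \<Rightarrow> real \<Rightarrow> real"
  assumes ab: "a < b"
    and al: "\<forall>i\<in>{1..n}. real i - 1 < al i \<and> al i < real i"
    and L_C1: "C1_lagr n a b L"
    and Z_sol: "\<forall>y. admissible n a b al xa y \<longrightarrow>
                   Z y a = za \<and>
                   (\<forall>t\<in>{a..b}. (Z y has_real_derivative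
                        L t (xvec n y t) (cvec n a b al y t) (Z y t)) (at t within {a..b}))"
    and x_adm: "admissible n a b al xa x"
begin

definition lam :: "real \<Rightarrow> real" where
  "lam t = exp (- integral {a..t} (\<lambda>\<tau>. pLz L \<tau> (xvec n x \<tau>) (cvec n a b al x \<tau>) (Z x \<tau>)))"

lemma lam_pos: "0 < lam t"
  unfolding lam_def by simp

lemma continuous_component:
  assumes "i \<in> {1..n}"
  shows "continuous_on {a..b} (x i)" and "continuous_on {a..b} (caputoL a b (al i) (x i))"
proof -
  have "Cn_on n {a..b} (x i)" "Cn_on 1 {a..b} (caputoL a b (al i) (x i))"
    using x_adm assms unfolding admissible_def by auto
  from Cn_on_continuous_hderiv[OF this(1), of 0] Cn_on_continuous_hderiv[OF this(2), of 0]
  show "continuous_on {a..b} (x i)" "continuous_on {a..b} (caputoL a b (al i) (x i))" by simp_all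
qed

lemma continuous_Z: "continuous_on {a..b} (Z x)"
proof -
  have "\<forall>t\<in>{a..b}. (Z x has_real_derivative L t (xvec n x t) (cvec n a b al x t) (Z x t)) (at t within {a..b})"
    using Z_sol x_adm by simp
  then show ?thesis using DERIV_continuous continuous_on_eq_continuous_within by blast
qed

lemma continuous_xvec: "continuous_on {a..b} (xvec n x)"
  unfolding xvec_def by (rule continuous_on_vecn) (use continuous_component(1) in auto)

lemma continuous_cvec: "continuous_on {a..b} (cvec n a b al x)"
  unfolding cvec_def by (rule continuous_on_vecn) (use continuous_component(2) in auto)

lemma continuous_along_curve:
  assumes f: "continuous_on (Ldom n a b) f"
  shows "continuous_on {a..b} (\<lambda>t. f (t, xvec n x t, cvec n a b al x t, Z x t))"
proof -
  have "continuous_on {a..b} (\<lambda>t. (t, xvec n x t, cvec n a b al x t, Z x t))"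
    by (intro continuous_intros continuous_xvec continuous_cvec continuous_Z)
  moreover have "(\<lambda>t. (t, xvec n x t, cvec n a b al x t, Z x t)) ` {a..b} \<subseteq> Ldom n a b"
    by (auto simp: Ldom_def xvec_def cvec_def vecn_def)
  ultimately show ?thesis by (rule continuous_on_compose2[OF f])
qed

lemma continuous_on_updated_curve:
  assumes f: "continuous_on (Ldom n a b) f" and i: "i \<in> {1..n}"
  shows "continuous_on ({a..b} \<times> UNIV)
    (\<lambda>(t, p, q, z). f (t, (xvec n x t)(i := p), (cvec n a b al x t)(i := q), z))"
proof -
  have cXf: "continuous_on ({a..b} \<times> (UNIV :: (real \<times> real \<times> real) set)) (\<lambda>w. xvec n x (fst w))"
    by (rule continuous_on_compose2[OF continuous_xvec continuous_on_fst[OF continuous_on_id]]) auto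
  have cVf: "continuous_on ({a..b} \<times> (UNIV :: (real \<times> real \<times> real) set)) (\<lambda>w. cvec n a b al x (fst w))"
    by (rule continuous_on_compose2[OF continuous_cvec continuous_on_fst[OF continuous_on_id]]) auto
  have "continuous_on ({a..b} \<times> UNIV)
      (\<lambda>w :: real \<times> real \<times> real \<times> real. (fst w, (xvec n x (fst w))(i := fst (snd w)),
         (cvec n a b al x (fst w))(i := fst (snd (snd w))), snd (snd (snd w))))"
    by (intro continuous_intros continuous_on_fun_upd[OF cXf] continuous_on_fun_upd[OF cVf])
  moreover have "(\<lambda>w :: real \<times> real \<times> real \<times> real. (fst w, (xvec n x (fst w))(i := fst (snd w)),
         (cvec n a b al x (fst w))(i := fst (snd (snd w))), snd (snd (snd w)))) ` ({a..b} \<times> UNIV) \<subseteq> Ldom n a b"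
    using i by (auto simp: Ldom_def xvec_def cvec_def vecn_def)
  ultimately have "continuous_on ({a..b} \<times> UNIV) (\<lambda>w :: real \<times> real \<times> real \<times> real.
      f (fst w, (xvec n x (fst w))(i := fst (snd w)), (cvec n a b al x (fst w))(i := fst (snd (snd w))), snd (snd (snd w))))"
    by (rule continuous_on_compose2[OF f])
  then show ?thesis by (simp add: case_prod_unfold)
qed

lemma updated_curve_in_Ldom:
  assumes "i \<in> {1..n}" "t \<in> {a..b}"
  shows "(t, (xvec n x t)(i := p), (cvec n a b al x t)(i := q), z) \<in> Ldom n a b"
  using assms by (auto simp: Ldom_def xvec_def cvec_def vecn_def)

lemma cvec_component_variation:
  assumes i: "i \<in> {1..n}" and \<eta>: "admissible n a b al (\<lambda>i j. 0) \<eta>"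
    and \<eta>_other: "\<And>k. k \<noteq> i \<Longrightarrow> \<eta> k = (\<lambda>_. 0)" and t: "t \<in> {a..b}"
  shows "cvec n a b al (\<lambda>k s. x k s + \<epsilon> * \<eta> k s) t
    = (cvec n a b al x t)(i := caputoL a b (al i) (x i) t + \<epsilon> * caputoL a b (al i) (\<eta> i) t)"
proof -
  have "caputoL a b (al k) (\<lambda>s. x k s + \<epsilon> * \<eta> k s) t
      = caputoL a b (al k) (x k) t + \<epsilon> * (if k = i then caputoL a b (al i) (\<eta> i) t else 0)"
    if "k \<in> {1..n}" for k
    using admissible_add_scaled(2)[OF ab al x_adm \<eta> that t] caputoL_zero_fun[OF ab t] \<eta>_other by auto
  then show ?thesis using i unfolding cvec_def vecn_def by (auto simp: fun_eq_iff)
qed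

lemma first_variation:
  assumes i: "i \<in> {1..n}" and \<eta>: "admissible n a b al (\<lambda>i j. 0) \<eta>"
    and \<eta>_other: "\<And>k. k \<noteq> i \<Longrightarrow> \<eta> k = (\<lambda>_. 0)"
  shows "((\<lambda>\<epsilon>. Z (\<lambda>k s. x k s + \<epsilon> * \<eta> k s) b) has_real_derivative
      integral {a..b} (\<lambda>t. lam t * (pLx L i t (xvec n x t) (cvec n a b al x t) (Z x t) * \<eta> i t
          + pLv L i t (xvec n x t) (cvec n a b al x t) (Z x t) * caputoL a b (al i) (\<eta> i) t)) / lam b) (at 0)"
proof -
  define X where "X = xvec n x"
  define V where "V = cvec n a b al x"
  define y where "y \<epsilon> = Z (\<lambda>k s. x k s + \<epsilon> * \<eta> k s)" for \<epsilon>
  have X_i: "(X t)(i := x i t) = X t" and V_i: "(V t)(i := caputoL a b (al i) (x i) t) = V t" for t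
    using i unfolding X_def V_def xvec_def cvec_def vecn_def by auto
  have xv: "xvec n (\<lambda>k s. x k s + \<epsilon> * \<eta> k s) t = (X t)(i := x i t + \<epsilon> * \<eta> i t)" for \<epsilon> t
    unfolding X_def by (rule xvec_component_variation[OF i \<eta>_other])
  have cv: "cvec n a b al (\<lambda>k s. x k s + \<epsilon> * \<eta> k s) t
      = (V t)(i := caputoL a b (al i) (x i) t + \<epsilon> * caputoL a b (al i) (\<eta> i) t)"
    if t: "t \<in> {a..b}" for \<epsilon> t
    unfolding V_def by (rule cvec_component_variation[OF i \<eta> \<eta>_other t])
  have cE: "continuous_on {a..b} (\<eta> i)" and cDE: "continuous_on {a..b} (caputoL a b (al i) (\<eta> i))"
  proof -
    have "Cn_on n {a..b} (\<eta> i)" "Cn_on 1 {a..b} (caputoL a b (al i) (\<eta> i))"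
      using \<eta> i unfolding admissible_def by auto
    from Cn_on_continuous_hderiv[OF this(1), of 0] Cn_on_continuous_hderiv[OF this(2), of 0]
    show "continuous_on {a..b} (\<eta> i)" "continuous_on {a..b} (caputoL a b (al i) (\<eta> i))" by simp_all
  qed
  have dom: "(t, (X t)(i := p), (V t)(i := q), z) \<in> Ldom n a b" if "t \<in> {a..b}" for t p q z
    unfolding X_def V_def by (rule updated_curve_in_Ldom[OF i that])
  interpret parametrized_ode a b
    "\<lambda>t p q z. L t ((X t)(i := p)) ((V t)(i := q)) z"
    "\<lambda>t p q z. pLx L i t ((X t)(i := p)) ((V t)(i := q)) z"
    "\<lambda>t p q z. pLv L i t ((X t)(i := p)) ((V t)(i := q)) z"
    "\<lambda>t p q z. pLz L t ((X t)(i := p)) ((V t)(i := q)) z"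
    "x i" "caputoL a b (al i) (x i)" "\<eta> i" "caputoL a b (al i) (\<eta> i)" y
  proof
    show "a < b" by (rule ab)
    fix t p q z assume t: "t \<in> {a..b}"
    show "((\<lambda>s. L t ((X t)(i := s)) ((V t)(i := q)) z) has_real_derivative
        pLx L i t ((X t)(i := p)) ((V t)(i := q)) z) (at p)"
      using C1_lagr_partials(1)[OF L_C1 dom[OF t] i] by simp
    show "((\<lambda>s. L t ((X t)(i := p)) ((V t)(i := s)) z) has_real_derivative
        pLv L i t ((X t)(i := p)) ((V t)(i := q)) z) (at q)"
      using C1_lagr_partials(2)[OF L_C1 dom[OF t] i] by simp
    show "((\<lambda>s. L t ((X t)(i := p)) ((V t)(i := q)) s) has_real_derivative
        pLz L t ((X t)(i := p)) ((V t)(i := q)) z) (at z)"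
      using C1_lagr_partials(3)[OF L_C1 dom[OF t] i] by simp
  next
    show "continuous_on ({a..b} \<times> UNIV) (\<lambda>(t, p, q, z). pLx L i t ((X t)(i := p)) ((V t)(i := q)) z)"
      using continuous_on_updated_curve[OF C1_lagr_continuous_partials(1)[OF L_C1 i] i]
      unfolding X_def V_def by simp
    show "continuous_on ({a..b} \<times> UNIV) (\<lambda>(t, p, q, z). pLv L i t ((X t)(i := p)) ((V t)(i := q)) z)"
      using continuous_on_updated_curve[OF C1_lagr_continuous_partials(2)[OF L_C1 i] i]
      unfolding X_def V_def by simp
    show "continuous_on ({a..b} \<times> UNIV) (\<lambda>(t, p, q, z). pLz L t ((X t)(i := p)) ((V t)(i := q)) z)"
      using continuous_on_updated_curve[OF C1_lagr_continuous_partials(3)[OF L_C1 i] i]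
      unfolding X_def V_def by simp
  next
    show "continuous_on {a..b} (x i)" "continuous_on {a..b} (caputoL a b (al i) (x i))"
      using continuous_component[OF i] .
    show "continuous_on {a..b} (\<eta> i)" "continuous_on {a..b} (caputoL a b (al i) (\<eta> i))"
      using cE cDE .
  next
    fix \<epsilon>
    show "y \<epsilon> a = y 0 a"
      unfolding y_def using Z_sol admissible_add_scaled(1)[OF ab al x_adm \<eta>] x_adm by simp
    fix t assume t: "t \<in> {a..b}"
    have "(Z (\<lambda>k s. x k s + \<epsilon> * \<eta> k s) has_real_derivative
        L t (xvec n (\<lambda>k s. x k s + \<epsilon> * \<eta> k s) t) (cvec n a b al (\<lambda>k s. x k s + \<epsilon> * \<eta> k s) t)
          (Z (\<lambda>k s. x k s + \<epsilon> * \<eta> k s) t)) (at t within {a..b})"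
      using Z_sol admissible_add_scaled(1)[OF ab al x_adm \<eta>] t by simp
    then show "(y \<epsilon> has_real_derivative L t ((X t)(i := x i t + \<epsilon> * \<eta> i t))
        ((V t)(i := caputoL a b (al i) (x i) t + \<epsilon> * caputoL a b (al i) (\<eta> i) t)) (y \<epsilon> t)) (at t within {a..b})"
      unfolding y_def xv cv[OF t] .
  qed
  have y0: "y 0 = Z x" unfolding y_def by simp
  show ?thesis
    using endpoint_has_derivative unfolding y0 X_i V_i
    unfolding y_def X_def V_def lam_def by (simp add: algebra_simps)
qed

definition weighted_Lx :: "nat \<Rightarrow> real \<Rightarrow> real" where
  "weighted_Lx i t = lam t * pLx L i t (xvec n x t) (cvec n a b al x t) (Z x t)"

definition weighted_Lv :: "nat \<Rightarrow> real \<Rightarrow> real" where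
  "weighted_Lv i t = lam t * pLv L i t (xvec n x t) (cvec n a b al x t) (Z x t)"

lemma continuous_weighted_partials:
  assumes "i \<in> {1..n}"
  shows "continuous_on {a..b} (weighted_Lx i)" and "continuous_on {a..b} (weighted_Lv i)"
proof -
  have "continuous_on {a..b} lam"
  proof -
    have "continuous_on {a..b} (\<lambda>t. pLz L t (xvec n x t) (cvec n a b al x t) (Z x t))"
      using continuous_along_curve[OF C1_lagr_continuous_partials(3)[OF L_C1 assms]] by simp
    then have "continuous_on {a..b} (\<lambda>t. integral {a..t} (\<lambda>\<tau>. pLz L \<tau> (xvec n x \<tau>) (cvec n a b al x \<tau>) (Z x \<tau>)))"
      using integral_has_real_derivative DERIV_continuous continuous_on_eq_continuous_within by blast
    then show ?thesis unfolding lam_def by (intro continuous_intros)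
  qed
  then show "continuous_on {a..b} (weighted_Lx i)" "continuous_on {a..b} (weighted_Lv i)"
    unfolding weighted_Lx_def weighted_Lv_def
    using continuous_along_curve[OF C1_lagr_continuous_partials(1)[OF L_C1 assms]]
      continuous_along_curve[OF C1_lagr_continuous_partials(2)[OF L_C1 assms]]
    by (auto intro!: continuous_intros)
qed

definition weighted_Lv_integral :: "nat \<Rightarrow> real \<Rightarrow> real" where
  "weighted_Lv_integral i = rRL_int b (real i - al i) (weighted_Lv i)"

lemma trunc_pow_moment_identity:
  assumes i: "i \<in> {1..n}" and c: "c \<in> {a<..<b}"
    and I: "Cn_on i {a..b} (weighted_Lv_integral i)"
    and extremal: "\<forall>\<eta>. admissible n a b al (\<lambda>i j. 0) \<eta> \<longrightarrow>
                   ((\<lambda>\<epsilon>. Z (\<lambda>i s. x i s + \<epsilon> * \<eta> i s) b) has_real_derivative 0) (at 0)"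
  shows "integral {a..b} (\<lambda>\<tau>. trunc_pow (n + 1) c \<tau>
      * (weighted_Lx i \<tau> + (-1) ^ i * hderiv i {a..b} (weighted_Lv_integral i) \<tau>))
    = (\<Sum>k<i. - ((-1) ^ k * (fact (n + 1) / fact (n + 1 + 1 - i + k))
        * hderiv k {a..b} (weighted_Lv_integral i) b) * (b - c) ^ (n + 1 + 1 - i + k))"
proof -
  define N where "N = n + 1"
  define \<eta> where "\<eta> = (\<lambda>k. if k = i then trunc_pow N c else (\<lambda>_::real. 0::real))"
  define D where "D = caputoL a b (al i) (trunc_pow N c)"
  define I where "I = weighted_Lv_integral i"
  have \<eta>_adm: "admissible n a b al (\<lambda>i j. 0) \<eta>"
    unfolding \<eta>_def N_def by (rule admissible_trunc_pow_variation[OF ab al i c])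
  have m: "nat \<lfloor>al i\<rfloor> + 1 = i" using fractional_order_facts(1)[OF al i] .
  have i_N: "1 \<le> i" "i < N" using i unfolding N_def by auto
  have "Cn_on 1 {a..b} D"
    using bspec[OF \<eta>_adm[unfolded admissible_def] i] unfolding \<eta>_def D_def by simp
  from Cn_on_continuous_hderiv[OF this, of 0] have cD: "continuous_on {a..b} D" by simp
  have cpp: "continuous_on {a..b} (trunc_pow N c)" by (rule continuous_on_trunc_pow)
  note cLx = continuous_weighted_partials(1)[OF i] and cLv = continuous_weighted_partials(2)[OF i]
  have first_var: "integral {a..b} (\<lambda>t. weighted_Lx i t * trunc_pow N c t + weighted_Lv i t * D t) = 0"
  proof -
    have fv: "((\<lambda>\<epsilon>. Z (\<lambda>k s. x k s + \<epsilon> * \<eta> k s) b) has_real_derivative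
      integral {a..b} (\<lambda>t. weighted_Lx i t * trunc_pow N c t + weighted_Lv i t * D t) / lam b) (at 0)"
      using first_variation[OF i \<eta>_adm] unfolding \<eta>_def D_def weighted_Lx_def weighted_Lv_def
      by (simp add: algebra_simps)
    have "((\<lambda>\<epsilon>. Z (\<lambda>k s. x k s + \<epsilon> * \<eta> k s) b) has_real_derivative 0) (at 0)"
      using extremal \<eta>_adm by blast
    from DERIV_unique[OF fv this] show ?thesis using lam_pos[of b] by simp
  qed
  have "Cn_on (N - 1) {a..b} (trunc_pow N c)"
    using Cn_on_trunc_pow[OF ab, of N c] unfolding N_def by simp
  then have "Cn_on (nat \<lfloor>al i\<rfloor> + 1) {a..b} (trunc_pow N c)"
    unfolding m by (rule Cn_on_mono) (use i_N in simp)
  from caputoL_integration_by_parts[OF less_imp_le[OF ab] this cLv]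
  have frac_ibp: "integral {a..b} (\<lambda>t. weighted_Lv i t * D t)
      = integral {a..b} (\<lambda>t. hderiv i {a..b} (trunc_pow N c) t * I t)"
    unfolding D_def I_def weighted_Lv_integral_def m .
  have cI: "continuous_on {a..b} (hderiv i {a..b} I)"
    using Cn_on_continuous_hderiv[OF I order_refl] unfolding I_def .
  have int: "(\<lambda>t. weighted_Lx i t * trunc_pow N c t) integrable_on {a..b}"
      "(\<lambda>t. weighted_Lv i t * D t) integrable_on {a..b}"
      "(\<lambda>t. trunc_pow N c t * hderiv i {a..b} I t) integrable_on {a..b}"
    by (intro integrable_continuous_real continuous_intros cLx cLv cD cpp cI)+
  have "integral {a..b} (\<lambda>\<tau>. trunc_pow N c \<tau> * (weighted_Lx i \<tau> + (-1) ^ i * hderiv i {a..b} I \<tau>))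
      = integral {a..b} (\<lambda>t. weighted_Lx i t * trunc_pow N c t)
        + (-1) ^ i * integral {a..b} (\<lambda>t. trunc_pow N c t * hderiv i {a..b} I t)"
  proof -
    have "integral {a..b} (\<lambda>\<tau>. trunc_pow N c \<tau> * (weighted_Lx i \<tau> + (-1) ^ i * hderiv i {a..b} I \<tau>))
        = integral {a..b} (\<lambda>t. weighted_Lx i t * trunc_pow N c t + (-1) ^ i * (trunc_pow N c t * hderiv i {a..b} I t))"
      by (rule integral_cong) (simp add: algebra_simps)
    then show ?thesis
      using integral_add[OF int(1) integrable_on_mult_right[OF int(3), of "(-1) ^ i"]] by simp
  qed
  also have "integral {a..b} (\<lambda>t. weighted_Lx i t * trunc_pow N c t)
      = - integral {a..b} (\<lambda>t. hderiv i {a..b} (trunc_pow N c) t * I t)"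
    using first_var frac_ibp integral_add[OF int(1,2)] by simp
  finally show ?thesis
    unfolding trunc_pow_integration_by_parts[OF ab c i_N I[folded I_def]]
    by (simp add: N_def I_def sum_negf algebra_simps)
qed

lemma euler_lagrange_boundary_form:
  assumes i: "i \<in> {1..n}" and I: "Cn_on i {a..b} (weighted_Lv_integral i)"
    and extremal: "\<forall>\<eta>. admissible n a b al (\<lambda>i j. 0) \<eta> \<longrightarrow>
                   ((\<lambda>\<epsilon>. Z (\<lambda>i s. x i s + \<epsilon> * \<eta> i s) b) has_real_derivative 0) (at 0)"
  shows "\<forall>t\<in>{a..b}. weighted_Lx i t + (-1) ^ i * hderiv i {a..b} (weighted_Lv_integral i) t = 0"
    and "\<forall>k<i. hderiv k {a..b} (weighted_Lv_integral i) b = 0"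
proof -
  have h: "continuous_on {a..b} (\<lambda>t. weighted_Lx i t + (-1) ^ i * hderiv i {a..b} (weighted_Lv_integral i) t)"
    using continuous_weighted_partials(1)[OF i] Cn_on_continuous_hderiv[OF I order_refl]
    by (intro continuous_intros)
  note vanish = trunc_pow_moments_vanish[OF ab h _ _ trunc_pow_moment_identity[OF i _ I extremal]]
  show "\<forall>t\<in>{a..b}. weighted_Lx i t + (-1) ^ i * hderiv i {a..b} (weighted_Lv_integral i) t = 0"
    using vanish(1) i by simp
  show "\<forall>k<i. hderiv k {a..b} (weighted_Lv_integral i) b = 0"
    using vanish(2) i by simp
qed

lemma euler_lagrange:
  assumes i: "i \<in> {1..n}" and RL: "rRL_deriv_exists_cont a b (al i) (weighted_Lv i)"
    and extremal: "\<forall>\<eta>. admissible n a b al (\<lambda>i j. 0) \<eta> \<longrightarrow>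
                   ((\<lambda>\<epsilon>. Z (\<lambda>i s. x i s + \<epsilon> * \<eta> i s) b) has_real_derivative 0) (at 0)"
    and t: "t \<in> {a..b}"
  shows "weighted_Lx i t + rRL_deriv a b (al i) (weighted_Lv i) t = 0"
proof -
  have m: "nat \<lfloor>al i\<rfloor> + 1 = i" using fractional_order_facts(1)[OF al i] .
  have I: "Cn_on i {a..b} (weighted_Lv_integral i)"
    using RL unfolding rRL_deriv_exists_cont_def weighted_Lv_integral_def m .
  show ?thesis
    using euler_lagrange_boundary_form(1)[OF i I extremal] t
    unfolding rRL_deriv_def Let_def m weighted_Lv_integral_def by simp
qed

lemma transversality:
  assumes i: "i \<in> {1..n}" and RL: "rRL_deriv_exists_cont a b (al i) (weighted_Lv i)"
    and extremal: "\<forall>\<eta>. admissible n a b al (\<lambda>i j. 0) \<eta> \<longrightarrow>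
                   ((\<lambda>\<epsilon>. Z (\<lambda>i s. x i s + \<epsilon> * \<eta> i s) b) has_real_derivative 0) (at 0)"
    and j: "j < i"
  shows "rRL a b (al i + real j - real i) (weighted_Lv i) b = 0"
proof (cases "j = 0")
  case True
  then have "al i + real j - real i < 0" using al i by auto
  then show ?thesis unfolding rRL_def rRL_int_def by simp
next
  case False
  have m: "nat \<lfloor>al i\<rfloor> + 1 = i" using fractional_order_facts(1)[OF al i] .
  have I: "Cn_on i {a..b} (weighted_Lv_integral i)"
    using RL unfolding rRL_deriv_exists_cont_def weighted_Lv_integral_def m .
  have ali: "real i - 1 < al i" "al i < real i" using al i by auto
  have "nat \<lfloor>al i + real j - real i\<rfloor> + 1 = j"
    by (rule floor_order_eq) (use ali False in auto)
  moreover have "\<not> al i + real j - real i < 0" using ali False by auto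
  ultimately show ?thesis
    using euler_lagrange_boundary_form(2)[OF i I extremal] j
    unfolding rRL_def rRL_deriv_def Let_def weighted_Lv_integral_def by simp
qed

end

theorem theorem3p4:
  fixes a b za :: real and n :: nat and al :: "nat \<Rightarrow> real"
    and xa :: "nat \<Rightarrow> nat \<Rightarrow> real" and L :: lagr
    and Z :: "(nat \<Rightarrow> real \<Rightarrow> real) \<Rightarrow> real \<Rightarrow> real"
    and x :: "nat \<Rightarrow> real \<Rightarrow> real"
  assumes ab: "a < b"
    and al: "\<forall>i\<in>{1..n}. real i - 1 < al i \<and> al i < real i"
    and L_C1: "C1_lagr n a b L"
    and Z_sol: "\<forall>y. admissible n a b al xa y \<longrightarrow>
                   Z y a = za \<and>
                   (\<forall>t\<in>{a..b}. (Z y has_real_derivative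
                        L t (xvec n y t) (cvec n a b al y t) (Z y t)) (at t within {a..b}))"
    and Z_diff: "\<forall>\<eta>. admissible n a b al (\<lambda>i j. 0) \<eta> \<longrightarrow>
                   (\<forall>t\<in>{a..b}. (\<lambda>\<epsilon>. Z (\<lambda>i s. x i s + \<epsilon> * \<eta> i s) t) differentiable (at 0))"
    and x_adm: "admissible n a b al xa x"
    and RL_ex: "\<forall>i\<in>{1..n}. rRL_deriv_exists_cont a b (al i)
                  (\<lambda>t. exp (- integral {a..t} (\<lambda>\<tau>. pLz L \<tau> (xvec n x \<tau>) (cvec n a b al x \<tau>) (Z x \<tau>)))
                        * pLv L i t (xvec n x t) (cvec n a b al x t) (Z x t))"
    and extremal: "\<forall>\<eta>. admissible n a b al (\<lambda>i j. 0) \<eta> \<longrightarrow>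
                   ((\<lambda>\<epsilon>. Z (\<lambda>i s. x i s + \<epsilon> * \<eta> i s) b) has_real_derivative 0) (at 0)"
  shows "(\<forall>i\<in>{1..n}. \<forall>t\<in>{a..b}.
           exp (- integral {a..t} (\<lambda>\<tau>. pLz L \<tau> (xvec n x \<tau>) (cvec n a b al x \<tau>) (Z x \<tau>)))
             * pLx L i t (xvec n x t) (cvec n a b al x t) (Z x t)
           + rRL_deriv a b (al i)
               (\<lambda>s. exp (- integral {a..s} (\<lambda>\<tau>. pLz L \<tau> (xvec n x \<tau>) (cvec n a b al x \<tau>) (Z x \<tau>)))
                    * pLv L i s (xvec n x s) (cvec n a b al x s) (Z x s)) t = 0)
         \<and> (\<forall>i\<in>{1..n}. \<forall>j<i.
           rRL a b (al i + real j - real i)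
               (\<lambda>s. exp (- integral {a..s} (\<lambda>\<tau>. pLz L \<tau> (xvec n x \<tau>) (cvec n a b al x \<tau>) (Z x \<tau>)))
                    * pLv L i s (xvec n x s) (cvec n a b al x s) (Z x s)) b = 0)"
proof -
  interpret fractional_lagrange_problem a b za n al xa L Z x
    using ab al L_C1 Z_sol x_adm by unfold_locales
  have Lx: "exp (- integral {a..t} (\<lambda>\<tau>. pLz L \<tau> (xvec n x \<tau>) (cvec n a b al x \<tau>) (Z x \<tau>)))
      * pLx L i t (xvec n x t) (cvec n a b al x t) (Z x t) = weighted_Lx i t" for i t
    unfolding weighted_Lx_def lam_def ..
  have Lv: "(\<lambda>s. exp (- integral {a..s} (\<lambda>\<tau>. pLz L \<tau> (xvec n x \<tau>) (cvec n a b al x \<tau>) (Z x \<tau>)))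
      * pLv L i s (xvec n x s) (cvec n a b al x s) (Z x s)) = weighted_Lv i" for i
    unfolding weighted_Lv_def lam_def ..
  show ?thesis
    using RL_ex euler_lagrange[OF _ _ extremal] transversality[OF _ _ extremal] unfolding Lx Lv by blast
qed

end
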